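(* Let $\mathcal{H}$ be a Hilbert space of finite dimension $d$, and let the set of free states be $\mathcal{F}(\mathcal{H})=\bigcup_k\mathcal{F}_k(\mathcal{H})\subseteq\mathcal{D}(\mathcal{H})$, where each $\mathcal{F}_k(\mathcal{H})$ is a closed convex set and $\mathcal{F}(\mathcal{H})$ is closed. For any resource state $\rho\in\mathcal{D}(\mathcal{H})\setminus\mathcal{F}(\mathcal{H})$, \[\inf_k\ \max_{\{p_i,\Lambda_i\}_i,\{M_i\}_i}\frac{p_{\mathrm{succ}}(\rho,\{p_i,\Lambda_i\}_i,\{M_i\}_i)}{\max_{\sigma_k\in\mathcal{F}_k(\mathcal{H})}p_{\mathrm{succ}}(\sigma_k,\{p_i,\Lambda_i\}_i,\{M_i\}_i)}=1+R_{\mathcal{F}(\mathcal{H})}(\rho).\]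
   Context: $\mathcal{D}(\mathcal{H})$ is the set of density operators on $\mathcal{H}$. A channel ensemble $\{p_i,\Lambda_i\}_i$ consists of a finite probability distribution $(p_i)_i$ and quantum channels $\Lambda_i$ from operators on $\mathcal{H}$ to operators on a common finite-dimensional output space; $\{M_i\}_i$ is a POVM on the output space; $p_{\mathrm{succ}}(\omega,\{p_i,\Lambda_i\}_i,\{M_i\}_i)=\sum_ip_i\operatorname{tr}[M_i\Lambda_i(\omega)]$. The maximum in the numerator/denominator ratio is over all channel ensembles and POVMs. The generalized robustness is $R_{\mathcal{F}(\mathcal{H})}(\rho)=\min\{s\ge0:\exists\tau\in\mathcal{D}(\mathcal{H}),\ \frac{\rho+s\tau}{1+s}\in\mathcal{F}(\mathcal{H})\}$. *)

theory Defs
  imports "Jordan_Normal_Form.Matrix" "HOL-Library.Extended_Real"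
begin

text \<open>Finite-dimensional quantum states are represented by complex d x d matrices
  (JNF matrices, dimension is a value so that output and ancilla dimensions
  can be quantified over).\<close>

definition mtrace :: "complex mat \<Rightarrow> complex" where
  "mtrace A = (\<Sum>i<dim_row A. A $$ (i, i))"

definition adj :: "complex mat \<Rightarrow> complex mat" where
  "adj A = mat (dim_col A) (dim_row A) (\<lambda>(i, j). cnj (A $$ (j, i)))"

definition hermitian :: "complex mat \<Rightarrow> bool" where
  "hermitian A \<longleftrightarrow> adj A = A"

definition psd :: "nat \<Rightarrow> complex mat \<Rightarrow> bool" where
  "psd n A \<longleftrightarrow> A \<in> carrier_mat n n \<and> hermitian A \<and>
     (\<forall>v \<in> carrier_vec n. 0 \<le> Re (conjugate v \<bullet> (A *\<^sub>v v)))"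

definition density :: "nat \<Rightarrow> complex mat set" where
  "density n = {A. psd n A \<and> mtrace A = 1}"

definition blk :: "nat \<Rightarrow> complex mat \<Rightarrow> nat \<Rightarrow> nat \<Rightarrow> complex mat" where
  "blk d X a b = mat d d (\<lambda>(i, j). X $$ (a * d + i, b * d + j))"

text \<open>The map id_k tensor Lambda, applied blockwise.\<close>
definition ampl :: "nat \<Rightarrow> nat \<Rightarrow> nat \<Rightarrow> (complex mat \<Rightarrow> complex mat) \<Rightarrow> complex mat \<Rightarrow> complex mat" where
  "ampl k d m L X = mat (k * m) (k * m)
     (\<lambda>(i, j). L (blk d X (i div m) (j div m)) $$ (i mod m, j mod m))"

definition channel :: "nat \<Rightarrow> nat \<Rightarrow> (complex mat \<Rightarrow> complex mat) \<Rightarrow> bool" where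
  "channel d m L \<longleftrightarrow>
     (\<forall>A \<in> carrier_mat d d. L A \<in> carrier_mat m m) \<and>
     (\<forall>A \<in> carrier_mat d d. \<forall>B \<in> carrier_mat d d. \<forall>c.
        L (c \<cdot>\<^sub>m A + B) = c \<cdot>\<^sub>m L A + L B) \<and>
     (\<forall>A \<in> carrier_mat d d. mtrace (L A) = mtrace A) \<and>
     (\<forall>k X. psd (k * d) X \<longrightarrow> psd (k * m) (ampl k d m L X))"

definition povm :: "nat \<Rightarrow> nat \<Rightarrow> (nat \<Rightarrow> complex mat) \<Rightarrow> bool" where
  "povm m N M \<longleftrightarrow> (\<forall>i<N. psd m (M i)) \<and>
     (\<forall>a<m. \<forall>b<m. (\<Sum>i<N. M i $$ (a, b)) = (1\<^sub>m m :: complex mat) $$ (a, b))"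

definition channel_ensemble :: "nat \<Rightarrow> nat \<Rightarrow> nat \<Rightarrow> (nat \<Rightarrow> real) \<Rightarrow> (nat \<Rightarrow> complex mat \<Rightarrow> complex mat) \<Rightarrow> bool" where
  "channel_ensemble d m N p L \<longleftrightarrow>
     (\<forall>i<N. 0 \<le> p i) \<and> (\<Sum>i<N. p i) = 1 \<and> (\<forall>i<N. channel d m (L i))"

definition p_succ :: "complex mat \<Rightarrow> nat \<Rightarrow> (nat \<Rightarrow> real) \<Rightarrow> (nat \<Rightarrow> complex mat \<Rightarrow> complex mat) \<Rightarrow> (nat \<Rightarrow> complex mat) \<Rightarrow> real" where
  "p_succ \<omega> N p L M = (\<Sum>i<N. p i * Re (mtrace (M i * L i \<omega>)))"

definition mat_closed :: "nat \<Rightarrow> complex mat set \<Rightarrow> bool" where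
  "mat_closed d S \<longleftrightarrow> (\<forall>X A. (\<forall>n. X n \<in> S) \<longrightarrow> A \<in> carrier_mat d d \<longrightarrow>
     (\<forall>i<d. \<forall>j<d. (\<lambda>n. X n $$ (i, j)) \<longlonglongrightarrow> A $$ (i, j)) \<longrightarrow> A \<in> S)"

definition mat_convex :: "complex mat set \<Rightarrow> bool" where
  "mat_convex S \<longleftrightarrow> (\<forall>A \<in> S. \<forall>B \<in> S. \<forall>t::real. 0 \<le> t \<longrightarrow> t \<le> 1 \<longrightarrow>
     complex_of_real t \<cdot>\<^sub>m A + complex_of_real (1 - t) \<cdot>\<^sub>m B \<in> S)"

text \<open>Generalized robustness; the minimum over the empty set is \<infinity>.\<close>
definition gen_robustness :: "nat \<Rightarrow> complex mat set \<Rightarrow> complex mat \<Rightarrow> ereal" where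
  "gen_robustness d F \<rho> = Inf {ereal s | s. 0 \<le> s \<and>
     (\<exists>\<tau> \<in> density d. complex_of_real (1 / (1 + s)) \<cdot>\<^sub>m (\<rho> + complex_of_real s \<cdot>\<^sub>m \<tau>) \<in> F)}"

text \<open>The ratio in the theorem for a given free set Fk (denominator: max over Fk).
  Division is in the extended reals, so x / 0 = \<infinity> for x > 0.\<close>
definition succ_ratio :: "nat \<Rightarrow> complex mat set \<Rightarrow> complex mat \<Rightarrow> ereal" where
  "succ_ratio d Fk \<rho> = Sup {ereal (p_succ \<rho> N p L M) /
        (SUP \<sigma> \<in> Fk. ereal (p_succ \<sigma> N p L M)) | N m p L M.
      channel_ensemble d m N p L \<and> povm m N M}"

end

theory Submission
  imports Defs
begin

(* If \<rho> = (1 + s) \<sigma> - s \<tau> with \<sigma> \<in> F_k and \<tau> a state, every success probability of \<rho> is at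
   most (1 + s) times that of \<sigma>, because channels and POVM elements map states to
   nonnegative numbers.  Conversely, if no such decomposition exists for a given s, then \<rho>
   lies outside the closed convex set (1 + s) F_k - PSD.  The point of that set nearest to \<rho>
   (in Frobenius norm) yields a witness W \<ge> 0 with tr(W \<rho>) > (1 + s) tr(W \<sigma>) for all
   \<sigma> \<in> F_k, and the two-outcome POVM {\<epsilon> W, 1 - \<epsilon> W} measured after the identity channel
   attains the ratio 1 + s.  Hence the ratio for F_k is exactly 1 + R_{F_k}(\<rho>), and the
   robustness with respect to a union is the infimum of the robustnesses.
   Positivity of tr(A B) for positive semidefinite A, B comes from a Cholesky-type Gram
   decomposition of B. *)

definition entries :: "complex mat \<Rightarrow> nat \<Rightarrow> nat \<Rightarrow> complex" where
  "entries M i j = M $$ (i, j)"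

definition quad_form :: "nat \<Rightarrow> (nat \<Rightarrow> nat \<Rightarrow> complex) \<Rightarrow> (nat \<Rightarrow> complex) \<Rightarrow> complex" where
  "quad_form n A v = (\<Sum>i<n. \<Sum>j<n. cnj (v i) * A i j * v j)"

definition herm_on :: "nat \<Rightarrow> (nat \<Rightarrow> nat \<Rightarrow> complex) \<Rightarrow> bool" where
  "herm_on n A \<longleftrightarrow> (\<forall>i<n. \<forall>j<n. A j i = cnj (A i j))"

definition psd_on :: "nat \<Rightarrow> (nat \<Rightarrow> nat \<Rightarrow> complex) \<Rightarrow> bool" where
  "psd_on n A \<longleftrightarrow> herm_on n A \<and> (\<forall>v. 0 \<le> Re (quad_form n A v))"

lemma herm_onD: "herm_on n A \<Longrightarrow> i < n \<Longrightarrow> j < n \<Longrightarrow> A j i = cnj (A i j)"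
  unfolding herm_on_def by blast

lemma hermitian_iff_herm_on:
  assumes M: "M \<in> carrier_mat n n"
  shows "hermitian M \<longleftrightarrow> herm_on n (entries M)"
proof
  assume "hermitian M"
  then have e: "adj M = M" by (simp add: hermitian_def)
  show "herm_on n (entries M)" unfolding herm_on_def entries_def
  proof (intro allI impI)
    fix i j assume ij: "i < n" "j < n"
    have "M $$ (j, i) = adj M $$ (j, i)" using e by simp
    also have "\<dots> = cnj (M $$ (i, j))" using M ij by (simp add: adj_def)
    finally show "M $$ (j, i) = cnj (M $$ (i, j))" .
  qed
next
  assume h: "herm_on n (entries M)"
  show "hermitian M" unfolding hermitian_def
  proof (rule eq_matI)
    fix i j assume "i < dim_row M" "j < dim_col M"
    then have ij: "i < n" "j < n" using M by auto
    then have "M $$ (i, j) = cnj (M $$ (j, i))" using h[unfolded herm_on_def entries_def, rule_format, OF ij(2) ij(1)] by simp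
    then show "adj M $$ (i, j) = M $$ (i, j)" using M ij by (simp add: adj_def)
  qed (use M in \<open>auto simp: adj_def\<close>)
qed

lemma quad_form_vec:
  assumes "M \<in> carrier_mat n n" "v \<in> carrier_vec n"
  shows "conjugate v \<bullet> (M *\<^sub>v v) = quad_form n (entries M) (\<lambda>i. v $ i)"
proof -
  have r: "(M *\<^sub>v v) $ i = (\<Sum>j<n. M $$ (i,j) * v $ j)" if "i < n" for i
    using assms that by (simp add: scalar_prod_def atLeast0LessThan)
  show ?thesis using assms unfolding quad_form_def entries_def
    by (simp add: scalar_prod_def atLeast0LessThan r sum_distrib_left mult.assoc)
qed

lemma quad_form_cong: "(\<And>i. i < n \<Longrightarrow> v i = w i) \<Longrightarrow> quad_form n A v = quad_form n A w"
  unfolding quad_form_def by (auto intro!: sum.cong)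

lemma psd_iff_psd_on: "psd n M \<longleftrightarrow> M \<in> carrier_mat n n \<and> psd_on n (entries M)"
proof
  assume p: "psd n M"
  then have M: "M \<in> carrier_mat n n" by (simp add: psd_def)
  have "0 \<le> Re (quad_form n (entries M) v)" for v
  proof -
    have "0 \<le> Re (conjugate (vec n v) \<bullet> (M *\<^sub>v vec n v))" using p unfolding psd_def by auto
    also have "conjugate (vec n v) \<bullet> (M *\<^sub>v vec n v) = quad_form n (entries M) v"
      using quad_form_vec[OF M, of "vec n v"] quad_form_cong[of n "\<lambda>i. vec n v $ i" v "entries M"] by simp
    finally show ?thesis .
  qed
  moreover have "herm_on n (entries M)" using p M hermitian_iff_herm_on[OF M] by (simp add: psd_def)
  ultimately show "M \<in> carrier_mat n n \<and> psd_on n (entries M)" using M by (simp add: psd_on_def)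
next
  assume a: "M \<in> carrier_mat n n \<and> psd_on n (entries M)"
  then have M: "M \<in> carrier_mat n n" by simp
  have "0 \<le> Re (conjugate v \<bullet> (M *\<^sub>v v))" if "v \<in> carrier_vec n" for v
    using quad_form_vec[OF M that] a by (simp add: psd_on_def)
  then show "psd n M" unfolding psd_def using hermitian_iff_herm_on[OF M] a by (simp add: psd_on_def)
qed

lemma psd_on_cong:
  assumes "\<And>i j. i < n \<Longrightarrow> j < n \<Longrightarrow> A i j = B i j"
  shows "psd_on n A \<longleftrightarrow> psd_on n B"
proof -
  have "quad_form n A = quad_form n B"
    unfolding quad_form_def using assms by (intro ext sum.cong) auto
  moreover have "herm_on n A \<longleftrightarrow> herm_on n B"
    unfolding herm_on_def using assms by auto
  ultimately show ?thesis unfolding psd_on_def by simp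
qed

lemma psd_mat_iff_psd_on: "psd n (mat n n (\<lambda>(i, j). A i j)) \<longleftrightarrow> psd_on n A"
  using psd_on_cong[of n "entries (mat n n (\<lambda>(i, j). A i j))" A]
  by (simp add: psd_iff_psd_on entries_def)

lemma sum_lessThan_two_terms:
  fixes n :: nat
  assumes "i \<noteq> j" "i < n" "j < n" "\<And>l. l < n \<Longrightarrow> l \<noteq> i \<Longrightarrow> l \<noteq> j \<Longrightarrow> f l = 0"
  shows "(\<Sum>l<n. f l) = f i + f j"
proof -
  have "(\<Sum>l<n. f l) = (\<Sum>l\<in>{i,j}. f l)"
    by (rule sum.mono_neutral_right) (use assms in auto)
  then show ?thesis using assms(1) by simp
qed

lemma sum_lessThan_single_term:
  fixes n :: nat
  assumes "i < n" "\<And>l. l < n \<Longrightarrow> l \<noteq> i \<Longrightarrow> f l = 0"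
  shows "(\<Sum>l<n. f l) = f i"
proof -
  have "(\<Sum>l<n. f l) = (\<Sum>l\<in>{i}. f l)"
    by (rule sum.mono_neutral_right) (use assms in auto)
  then show ?thesis by simp
qed

lemma quad_form_unit:
  assumes "i < n"
  shows "quad_form n A (\<lambda>l. if l = i then 1 else 0) = A i i"
proof -
  have "(\<Sum>b<n. cnj (if a = i then 1 else 0) * A a b * (if b = i then 1 else 0)) = (if a = i then A i i else 0)" for a
    by (subst sum_lessThan_single_term[OF assms]) (use assms in auto)
  then show ?thesis unfolding quad_form_def by (simp add: sum_lessThan_single_term[OF assms] assms)
qed

lemma quad_form_two:
  assumes "i \<noteq> j" "i < n" "j < n"
  shows "quad_form n A (\<lambda>l. if l = i then 1 else if l = j then t else 0)
     = A i i + A i j * t + cnj t * A j i + cnj t * A j j * t"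
proof -
  let ?v = "\<lambda>l. if l = i then 1 else if l = j then t else 0"
  have inner: "(\<Sum>b<n. cnj (?v a) * A a b * ?v b) = cnj (?v a) * A a i + cnj (?v a) * A a j * t" for a
    by (subst sum_lessThan_two_terms[OF assms]) (use assms in auto)
  have "quad_form n A ?v = (\<Sum>a<n. cnj (?v a) * A a i + cnj (?v a) * A a j * t)"
    unfolding quad_form_def inner ..
  also have "\<dots> = A i i + A i j * t + (cnj t * A j i + cnj t * A j j * t)"
    by (subst sum_lessThan_two_terms[OF assms]) (use assms in auto)
  finally show ?thesis by simp
qed

lemma quad_form_shift:
  fixes n :: nat
  assumes k: "k < n"
  shows "quad_form n A (\<lambda>i. v i + (if i = k then t else 0)) = quad_form n A v
     + t * (\<Sum>i<n. cnj (v i) * A i k) + cnj t * (\<Sum>j<n. A k j * v j) + cnj t * A k k * t"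
proof -
  have e: "cnj (v i + (if i = k then t else 0)) * A i j * (v j + (if j = k then t else 0))
     = cnj (v i) * A i j * v j + (if j = k then t * (cnj (v i) * A i k) else 0)
       + (if i = k then cnj t * (A k j * v j) else 0)
       + (if i = k \<and> j = k then cnj t * A k k * t else 0)" for i j
    by (auto simp: algebra_simps)
  have s2: "(\<Sum>i<n. \<Sum>j<n. (if j = k then t * (cnj (v i) * A i k) else 0)) = t * (\<Sum>i<n. cnj (v i) * A i k)"
    using k by (simp add: sum_distrib_left)
  have s3: "(\<Sum>i<n. \<Sum>j<n. (if i = k then cnj t * (A k j * v j) else 0)) = cnj t * (\<Sum>j<n. A k j * v j)"
  proof -
    have "(\<Sum>j<n. (if i = k then cnj t * (A k j * v j) else 0)) = (if i = k then cnj t * (\<Sum>j<n. A k j * v j) else 0)" for i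
      by (simp add: sum_distrib_left)
    then show ?thesis using k by simp
  qed
  have s4: "(\<Sum>i<n. \<Sum>j<n. (if i = k \<and> j = k then cnj t * A k k * t else 0)) = cnj t * A k k * t"
  proof -
    have "(\<Sum>j<n. (if i = k \<and> j = k then cnj t * A k k * t else 0)) = (if i = k then cnj t * A k k * t else 0)" for i
      using k by (cases "i = k") auto
    then show ?thesis using k by simp
  qed
  show ?thesis unfolding quad_form_def e sum.distrib s2 s3 s4 ..
qed

lemma herm_on_diag_real:
  assumes "herm_on n A" "i < n"
  shows "A i i = complex_of_real (Re (A i i))"
proof -
  have "A i i = cnj (A i i)" using assms unfolding herm_on_def by blast
  then have "Im (A i i) = 0" by (metis cnj.simps(2) neg_equal_zero)
  then show ?thesis by (simp add: complex_eq_iff)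
qed

lemma psd_on_diag_nonneg:
  assumes "psd_on n A" "i < n"
  shows "0 \<le> Re (A i i)"
  using assms quad_form_unit[OF assms(2), of A] unfolding psd_on_def by metis

lemma le_mult_if_quadratic_nonneg:
  fixes a b C :: real
  assumes "0 \<le> a" "0 \<le> b" "0 \<le> C" "\<And>x. 0 \<le> a - 2 * x * C + x\<^sup>2 * C * b"
  shows "C \<le> a * b"
proof (cases "b = 0")
  case True
  show ?thesis
  proof (rule ccontr)
    assume "\<not> C \<le> a * b"
    then have C: "C > 0" using True by simp
    have "0 \<le> a - 2 * ((a + 1) / (2 * C)) * C" using assms(4)[of "(a+1)/(2*C)"] True by simp
    also have "\<dots> = -1" using C by (simp add: field_simps)
    finally show False by simp
  qed
next
  case False
  then have b: "b > 0" using assms by simp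
  have "0 \<le> a - 2 * (1/b) * C + (1/b)\<^sup>2 * C * b" using assms(4) .
  also have "\<dots> = (a * b - C) / b" using b by (simp add: field_simps power2_eq_square)
  finally show ?thesis using b by (simp add: zero_le_divide_iff)
qed

lemma psd_on_offdiag_bound:
  assumes p: "psd_on n A" and ij: "i < n" "j < n" "i \<noteq> j"
  shows "(cmod (A i j))\<^sup>2 \<le> Re (A i i) * Re (A j j)"
proof -
  have h: "herm_on n A" using p by (simp add: psd_on_def)
  have aji: "A j i = cnj (A i j)" using h ij unfolding herm_on_def by blast
  have ajj: "A j j = complex_of_real (Re (A j j))" by (rule herm_on_diag_real[OF h ij(2)])
  let ?C = "(cmod (A i j))\<^sup>2"
  show ?thesis
  proof (rule le_mult_if_quadratic_nonneg[OF psd_on_diag_nonneg[OF p ij(1)] psd_on_diag_nonneg[OF p ij(2)]])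
    show "0 \<le> ?C" by simp
    fix x :: real
    let ?t = "- complex_of_real x * cnj (A i j)"
    have "0 \<le> Re (quad_form n A (\<lambda>l. if l = i then 1 else if l = j then ?t else 0))"
      using p unfolding psd_on_def by blast
    also have "quad_form n A (\<lambda>l. if l = i then 1 else if l = j then ?t else 0)
       = A i i + A i j * ?t + cnj ?t * A j i + cnj ?t * A j j * ?t"
      by (rule quad_form_two[OF ij(3) ij(1) ij(2)])
    also have "Re \<dots> = Re (A i i) - 2 * x * ?C + x\<^sup>2 * ?C * Re (A j j)"
    proof -
      have e1: "A i j * cnj (A i j) = complex_of_real ?C" by (simp add: complex_mult_cnj cmod_def)
      have f1: "A i j * ?t = - complex_of_real (x * ?C)" using e1 by (simp add: algebra_simps)
      have f2: "cnj ?t * A j i = - complex_of_real (x * ?C)"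
        unfolding aji using e1 by (simp add: algebra_simps)
      have f3: "cnj ?t * A j j * ?t = complex_of_real (x\<^sup>2 * ?C * Re (A j j))"
        using e1 by (subst ajj) (simp add: algebra_simps power2_eq_square)
      show ?thesis unfolding f1 f2 f3 by simp
    qed
    finally show "0 \<le> Re (A i i) - 2 * x * ?C + x\<^sup>2 * ?C * Re (A j j)" .
  qed
qed

lemma psd_on_entry_sq_le:
  assumes p: "psd_on n A" and ij: "i < n" "j < n"
  shows "(cmod (A i j))\<^sup>2 \<le> Re (A i i) * Re (A j j)"
proof (cases "i = j")
  case True
  have "A i i = complex_of_real (Re (A i i))"
    using p ij(1) herm_on_diag_real unfolding psd_on_def by blast
  then have "cmod (A i i) = \<bar>Re (A i i)\<bar>" by (metis norm_of_real)
  then show ?thesis using True by (simp add: power2_eq_square)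
next
  case False
  then show ?thesis using psd_on_offdiag_bound[OF p ij] by simp
qed

lemma psd_on_zero_diag:
  assumes p: "psd_on n A" and k: "k < n" "A k k = 0" and j: "j < n"
  shows "A k j = 0" "A j k = 0"
proof -
  have "(cmod (A k j))\<^sup>2 \<le> 0" using psd_on_entry_sq_le[OF p k(1) j] k(2) by simp
  then show "A k j = 0" by simp
  moreover have "A j k = cnj (A k j)"
    using p k(1) j herm_onD unfolding psd_on_def by blast
  ultimately show "A j k = 0" by simp
qed

(* For A k k = 0 the division yields A itself, so no case split is needed downstream. *)
lemma psd_on_schur_complement:
  assumes p: "psd_on n A" and k: "k < n"
  shows "psd_on n (\<lambda>i j. A i j - A i k * A k j / A k k)"
proof (cases "A k k = 0")
  case True
  then show ?thesis using p by simp
next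
  case False
  have h: "herm_on n A" using p by (simp add: psd_on_def)
  define a where "a = Re (A k k)"
  have akk: "A k k = complex_of_real a" unfolding a_def by (rule herm_on_diag_real[OF h k])
  have ca: "complex_of_real a \<noteq> 0" using False akk by simp
  have herm: "herm_on n (\<lambda>i j. A i j - A i k * A k j / A k k)"
    unfolding herm_on_def
  proof (intro allI impI)
    fix i j assume ij: "i < n" "j < n"
    have "A j i = cnj (A i j)" by (rule herm_onD[OF h ij])
    moreover have "A k i = cnj (A i k)" by (rule herm_onD[OF h ij(1) k])
    moreover have "A j k = cnj (A k j)" by (rule herm_onD[OF h k ij(2)])
    ultimately show "A j i - A j k * A k i / A k k = cnj (A i j - A i k * A k j / A k k)"
      unfolding akk by (simp add: mult.commute)
  qed
  have "0 \<le> Re (quad_form n (\<lambda>i j. A i j - A i k * A k j / A k k) v)" for v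
  proof -
    define y where "y = (\<Sum>i<n. cnj (v i) * A i k)"
    have row: "(\<Sum>j<n. A k j * v j) = cnj y"
      unfolding y_def cnj_sum using herm_onD[OF h _ k] by (intro sum.cong) (auto simp: mult.commute)
    have "quad_form n (\<lambda>i j. A i j - A i k * A k j / A k k) v
        = quad_form n A v - (\<Sum>i<n. \<Sum>j<n. (cnj (v i) * A i k) * (A k j * v j)) / A k k"
      unfolding quad_form_def by (simp add: algebra_simps sum_subtractf sum_divide_distrib)
    also have "(\<Sum>i<n. \<Sum>j<n. (cnj (v i) * A i k) * (A k j * v j)) = y * cnj y"
      unfolding row[symmetric] unfolding y_def sum_product ..
    finally have qB: "quad_form n (\<lambda>i j. A i j - A i k * A k j / A k k) v
        = quad_form n A v - y * cnj y / complex_of_real a" unfolding akk .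
    let ?t = "- cnj y / complex_of_real a"
    have "quad_form n A (\<lambda>i. v i + (if i = k then ?t else 0))
        = quad_form n A v + ?t * y + cnj ?t * cnj y + cnj ?t * complex_of_real a * ?t"
      using quad_form_shift[OF k, of A v ?t] row akk unfolding y_def by simp
    also have "\<dots> = quad_form n (\<lambda>i j. A i j - A i k * A k j / A k k) v"
      unfolding qB using ca by (simp add: field_simps)
    finally show ?thesis using p unfolding psd_on_def by metis
  qed
  then show ?thesis using herm by (simp add: psd_on_def)
qed

lemma schur_complement_row_col_zero:
  assumes p: "psd_on n A" and k: "k < n" and j: "j < n"
  shows "A k j - A k k * A k j / A k k = 0" "A j k - A j k * A k k / A k k = 0"
  using psd_on_zero_diag[OF p k _ j] by (cases "A k k = 0"; simp)+

lemma schur_term_gram: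
  assumes p: "psd_on n A" and k: "k < n" and j: "j < n"
  defines "c \<equiv> \<lambda>i. A i k / complex_of_real (sqrt (Re (A k k)))"
  shows "A i k * A k j / A k k = c i * cnj (c j)"
proof -
  have h: "herm_on n A" using p by (simp add: psd_on_def)
  define a where "a = Re (A k k)"
  have akk: "A k k = complex_of_real a" unfolding a_def by (rule herm_on_diag_real[OF h k])
  have a0: "0 \<le> a" unfolding a_def using psd_on_diag_nonneg[OF p k] .
  have akj: "A k j = cnj (A j k)" using herm_onD[OF h j k] .
  have "complex_of_real (sqrt a) * complex_of_real (sqrt a) = complex_of_real a"
    using a0 by (simp flip: of_real_mult)
  then show ?thesis
    unfolding c_def akj a_def[symmetric] akk by (cases "a = 0") (simp_all add: field_simps)
qed

lemma psd_on_gram_decomp_from: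
  "k \<le> n \<Longrightarrow> psd_on n A \<Longrightarrow> (\<forall>i<n. \<forall>j<n. (i < k \<or> j < k) \<longrightarrow> A i j = 0)
    \<Longrightarrow> \<exists>u. \<forall>i<n. \<forall>j<n. A i j = (\<Sum>l\<in>{k..<n}. u l i * cnj (u l j))"
proof (induction "n - k" arbitrary: k A)
  case 0
  then show ?case by auto
next
  case (Suc m)
  have k: "k < n" and m: "m = n - Suc k" using Suc.hyps(2) by auto
  have p: "psd_on n A" and z: "\<forall>i<n. \<forall>j<n. (i < k \<or> j < k) \<longrightarrow> A i j = 0" using Suc.prems by auto
  define B where "B i j = A i j - A i k * A k j / A k k" for i j
  define c where "c i = A i k / complex_of_real (sqrt (Re (A k k)))" for i
  have pB: "psd_on n B" unfolding B_def by (rule psd_on_schur_complement[OF p k])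
  have zB: "\<forall>i<n. \<forall>j<n. (i < Suc k \<or> j < Suc k) \<longrightarrow> B i j = 0"
  proof (intro allI impI)
    fix i j assume ij: "i < n" "j < n" and "i < Suc k \<or> j < Suc k"
    then consider "i < k" | "j < k" | "i = k" | "j = k" by linarith
    then show "B i j = 0"
    proof cases
      case 1 then show ?thesis using z ij k unfolding B_def by simp
    next
      case 2 then show ?thesis using z ij k unfolding B_def by simp
    next
      case 3 then show ?thesis using schur_complement_row_col_zero(1)[OF p k ij(2)] unfolding B_def by simp
    next
      case 4 then show ?thesis using schur_complement_row_col_zero(2)[OF p k ij(1)] unfolding B_def by simp
    qed
  qed
  obtain u where u: "\<forall>i<n. \<forall>j<n. B i j = (\<Sum>l\<in>{Suc k..<n}. u l i * cnj (u l j))"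
    using Suc.hyps(1)[OF m _ pB zB] k by auto
  have "A i j = (\<Sum>l\<in>{k..<n}. (u(k := c)) l i * cnj ((u(k := c)) l j))" if ij: "i < n" "j < n" for i j
  proof -
    have "A i j = c i * cnj (c j) + B i j"
      using schur_term_gram[OF p k ij(2), of i] unfolding B_def c_def by simp
    also have "\<dots> = (\<Sum>l\<in>{k..<n}. (u(k := c)) l i * cnj ((u(k := c)) l j))"
      using k u ij by (simp add: sum.atLeast_Suc_lessThan)
    finally show ?thesis .
  qed
  then show ?case by blast
qed

lemma psd_on_gram_decomp:
  fixes n :: nat
  assumes "psd_on n A"
  shows "\<exists>u. \<forall>i<n. \<forall>j<n. A i j = (\<Sum>l<n. u l i * cnj (u l j))"
  using psd_on_gram_decomp_from[of 0 n A] assms by (simp add: atLeast0LessThan)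

lemma psd_on_pairing_nonneg:
  fixes n :: nat
  assumes A: "psd_on n A" and B: "psd_on n B"
  shows "0 \<le> Re (\<Sum>i<n. \<Sum>j<n. A i j * B j i)"
proof -
  obtain u where u: "\<forall>i<n. \<forall>j<n. B i j = (\<Sum>l<n. u l i * cnj (u l j))"
    using psd_on_gram_decomp[OF B] by blast
  have "(\<Sum>i<n. \<Sum>j<n. A i j * B j i) = (\<Sum>i<n. \<Sum>j<n. \<Sum>l<n. cnj (u l i) * A i j * u l j)"
    using u by (simp add: sum_distrib_left algebra_simps)
  also have "\<dots> = (\<Sum>i<n. \<Sum>l<n. \<Sum>j<n. cnj (u l i) * A i j * u l j)"
    by (rule sum.cong[OF refl], rule sum.swap)
  also have "\<dots> = (\<Sum>l<n. \<Sum>i<n. \<Sum>j<n. cnj (u l i) * A i j * u l j)"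
    by (rule sum.swap)
  also have "\<dots> = (\<Sum>l<n. quad_form n A (u l))"
    unfolding quad_form_def ..
  finally have e: "(\<Sum>i<n. \<Sum>j<n. A i j * B j i) = (\<Sum>l<n. quad_form n A (u l))" .
  have "0 \<le> (\<Sum>l<n. Re (quad_form n A (u l)))" using A by (intro sum_nonneg) (simp add: psd_on_def)
  then show ?thesis unfolding e by (simp add: Re_sum)
qed

lemma mtrace_mult:
  assumes "A \<in> carrier_mat n n" "B \<in> carrier_mat n n"
  shows "mtrace (A * B) = (\<Sum>i<n. \<Sum>j<n. A $$ (i, j) * B $$ (j, i))"
  using assms unfolding mtrace_def by (simp add: scalar_prod_def atLeast0LessThan)

lemma trace_mult_psd_nonneg:
  assumes "psd n A" "psd n B"
  shows "0 \<le> Re (mtrace (A * B))"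
proof -
  have A: "A \<in> carrier_mat n n" "psd_on n (entries A)" and B: "B \<in> carrier_mat n n" "psd_on n (entries B)"
    using assms psd_iff_psd_on by auto
  show ?thesis using psd_on_pairing_nonneg[OF A(2) B(2)] unfolding mtrace_mult[OF A(1) B(1)] entries_def .
qed

lemma density_carrier: "\<rho> \<in> density d \<Longrightarrow> \<rho> \<in> carrier_mat d d"
  unfolding density_def psd_def by simp

lemma density_psd: "\<rho> \<in> density d \<Longrightarrow> psd d \<rho>"
  unfolding density_def by simp

lemma density_herm: "\<sigma> \<in> density d \<Longrightarrow> herm_on d (entries \<sigma>)"
  using density_psd psd_iff_psd_on psd_on_def by blast

lemma density_entry_bound:
  assumes r: "\<sigma> \<in> density d" and ij: "i < d" "j < d"
  shows "cmod (\<sigma> $$ (i, j)) \<le> 1"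
proof -
  have c: "\<sigma> \<in> carrier_mat d d" and p: "psd_on d (entries \<sigma>)" and tr: "mtrace \<sigma> = 1"
    using r psd_iff_psd_on unfolding density_def by auto
  have dg: "Re (\<sigma> $$ (l, l)) \<le> 1" if l: "l < d" for l
  proof -
    have "(\<Sum>k<d. Re (\<sigma> $$ (k, k))) = 1" using tr c unfolding mtrace_def by (simp add: Re_sum[symmetric])
    moreover have "Re (\<sigma> $$ (l, l)) \<le> (\<Sum>k<d. Re (\<sigma> $$ (k, k)))"
      by (rule member_le_sum) (use l psd_on_diag_nonneg[OF p] in \<open>auto simp: entries_def\<close>)
    ultimately show ?thesis by simp
  qed
  have "(cmod (\<sigma> $$ (i, j)))\<^sup>2 \<le> Re (\<sigma> $$ (i, i)) * Re (\<sigma> $$ (j, j))"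
    using psd_on_entry_sq_le[OF p ij] by (simp add: entries_def)
  also have "\<dots> \<le> 1 * 1"
    using dg ij psd_on_diag_nonneg[OF p] by (intro mult_mono) (auto simp: entries_def)
  finally show ?thesis using power2_le_imp_le[of "cmod (\<sigma> $$ (i, j))" 1] by simp
qed

lemma psd_nonneg_comb:
  assumes A: "psd d A" and B: "psd d B" and a: "0 \<le> a" and b: "0 \<le> b"
  shows "psd d (complex_of_real a \<cdot>\<^sub>m A + complex_of_real b \<cdot>\<^sub>m B)"
proof -
  have Ac: "A \<in> carrier_mat d d" and pA: "psd_on d (entries A)" and Bc: "B \<in> carrier_mat d d" and pB: "psd_on d (entries B)"
    using A B psd_iff_psd_on by auto
  let ?C = "complex_of_real a \<cdot>\<^sub>m A + complex_of_real b \<cdot>\<^sub>m B"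
  have Cc: "?C \<in> carrier_mat d d" using Ac Bc by simp
  have entry: "entries ?C i j = complex_of_real a * entries A i j + complex_of_real b * entries B i j" if "i < d" "j < d" for i j
    using that Ac Bc by (simp add: entries_def)
  have hA: "herm_on d (entries A)" and hB: "herm_on d (entries B)" using pA pB by (auto simp: psd_on_def)
  have h: "herm_on d (entries ?C)" unfolding herm_on_def
  proof (intro allI impI)
    fix i j assume ij: "i < d" "j < d"
    show "entries ?C j i = cnj (entries ?C i j)" using entry ij herm_onD[OF hA ij] herm_onD[OF hB ij] by simp
  qed
  have "quad_form d (entries ?C) v = complex_of_real a * quad_form d (entries A) v + complex_of_real b * quad_form d (entries B) v" for v
  proof -
    have "quad_form d (entries ?C) v = (\<Sum>i<d. \<Sum>j<d. cnj (v i) * (complex_of_real a * entries A i j + complex_of_real b * entries B i j) * v j)"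
      unfolding quad_form_def by (intro sum.cong refl) (simp add: entry)
    also have "\<dots> = complex_of_real a * quad_form d (entries A) v + complex_of_real b * quad_form d (entries B) v"
      unfolding quad_form_def by (simp add: algebra_simps sum.distrib sum_distrib_left)
    finally show ?thesis .
  qed
  then have "0 \<le> Re (quad_form d (entries ?C) v)" for v
    using pA pB a b unfolding psd_on_def by simp
  then show ?thesis using psd_iff_psd_on Cc h by (simp add: psd_on_def)
qed

lemma psd_add:
  assumes A: "psd d A" and B: "psd d B"
  shows "psd d (A + B)"
proof -
  have Ac: "A \<in> carrier_mat d d" and Bc: "B \<in> carrier_mat d d" using A B by (auto simp: psd_def)
  have "A + B = complex_of_real 1 \<cdot>\<^sub>m A + complex_of_real 1 \<cdot>\<^sub>m B"
    by (rule eq_matI) (use Ac Bc in auto)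
  then show ?thesis using psd_nonneg_comb[OF A B, of 1 1] by simp
qed

lemma psd_smult:
  assumes A: "psd d A" and a: "0 \<le> a"
  shows "psd d (complex_of_real a \<cdot>\<^sub>m A)"
proof -
  have Ac: "A \<in> carrier_mat d d" using A by (simp add: psd_def)
  have "complex_of_real a \<cdot>\<^sub>m A + complex_of_real 0 \<cdot>\<^sub>m A = complex_of_real a \<cdot>\<^sub>m A"
    by (rule eq_matI) (use Ac in auto)
  then show ?thesis using psd_nonneg_comb[OF A A a order_refl] by simp
qed

lemma psd_zero: "psd d (0\<^sub>m d d)"
proof -
  have "psd_on d (entries (0\<^sub>m d d))" unfolding psd_on_def herm_on_def quad_form_def entries_def by simp
  then show ?thesis using psd_iff_psd_on by simp
qed

definition outer_mat :: "nat \<Rightarrow> (nat \<Rightarrow> complex) \<Rightarrow> complex mat" where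
  "outer_mat d v = mat d d (\<lambda>(i, j). v i * cnj (v j))"

lemma psd_outer_mat: "psd d (outer_mat d v)"
proof -
  have c: "outer_mat d v \<in> carrier_mat d d" unfolding outer_mat_def by simp
  have h: "herm_on d (entries (outer_mat d v))" unfolding herm_on_def entries_def outer_mat_def by simp
  have qfw: "quad_form d (entries (outer_mat d v)) w = (\<Sum>i<d. cnj (w i) * v i) * cnj (\<Sum>i<d. cnj (w i) * v i)" for w
  proof -
    have "quad_form d (entries (outer_mat d v)) w = (\<Sum>i<d. \<Sum>j<d. (cnj (w i) * v i) * (cnj (v j) * w j))"
      unfolding quad_form_def entries_def outer_mat_def by (intro sum.cong refl) (simp add: algebra_simps)
    also have "\<dots> = (\<Sum>i<d. cnj (w i) * v i) * (\<Sum>j<d. cnj (v j) * w j)"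
      unfolding sum_product ..
    also have "(\<Sum>j<d. cnj (v j) * w j) = cnj (\<Sum>i<d. cnj (w i) * v i)"
      by (simp add: ac_simps)
    finally show ?thesis .
  qed
  have "0 \<le> Re (quad_form d (entries (outer_mat d v)) w)" for w
    unfolding qfw complex_mult_cnj Re_complex_of_real by simp
  then show ?thesis using psd_iff_psd_on c h by (simp add: psd_on_def)
qed

lemma psd_limit:
  assumes X: "\<And>n. psd d (X n)" and A: "A \<in> carrier_mat d d"
    and lim: "\<And>i j. i < d \<Longrightarrow> j < d \<Longrightarrow> (\<lambda>n. X n $$ (i, j)) \<longlonglongrightarrow> A $$ (i, j)"
  shows "psd d A"
proof -
  have pX: "psd_on d (entries (X n))" for n using X psd_iff_psd_on by blast
  have h: "herm_on d (entries A)" unfolding herm_on_def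
  proof (intro allI impI)
    fix i j assume ij: "i < d" "j < d"
    have hn: "herm_on d (entries (X n))" for n using pX by (simp add: psd_on_def)
    have "entries (X n) j i = cnj (entries (X n) i j)" for n by (rule herm_onD[OF hn ij])
    then have "(\<lambda>n. X n $$ (j, i)) = (\<lambda>n. cnj (X n $$ (i, j)))" unfolding entries_def by (rule ext)
    moreover have "(\<lambda>n. cnj (X n $$ (i, j))) \<longlonglongrightarrow> cnj (A $$ (i, j))"
      by (rule tendsto_cnj[OF lim[OF ij]])
    ultimately have "(\<lambda>n. X n $$ (j, i)) \<longlonglongrightarrow> cnj (A $$ (i, j))" by simp
    then show "entries A j i = cnj (entries A i j)" unfolding entries_def
      using lim[OF ij(2) ij(1)] LIMSEQ_unique by blast
  qed
  have "0 \<le> Re (quad_form d (entries A) v)" for v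
  proof -
    have "(\<lambda>n. Re (quad_form d (entries (X n)) v)) \<longlonglongrightarrow> Re (quad_form d (entries A) v)"
      unfolding quad_form_def entries_def
      by (intro tendsto_Re tendsto_sum tendsto_mult tendsto_const lim) auto
    moreover have "\<forall>n. 0 \<le> Re (quad_form d (entries (X n)) v)" using pX unfolding psd_on_def by blast
    ultimately show ?thesis by (meson LIMSEQ_le_const)
  qed
  then show ?thesis using psd_iff_psd_on A h by (simp add: psd_on_def)
qed

lemma psd_trace_zero_entry:
  assumes P: "psd d P" and tr: "mtrace P = 0" and ij: "i < d" "j < d"
  shows "P $$ (i, j) = 0"
proof -
  have Pc: "P \<in> carrier_mat d d" and p: "psd_on d (entries P)" using P psd_iff_psd_on by auto
  have nn: "\<forall>k\<in>{..<d}. 0 \<le> Re (P $$ (k, k))" using psd_on_diag_nonneg[OF p] by (simp add: entries_def)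
  have "(\<Sum>k<d. Re (P $$ (k, k))) = 0" using tr Pc unfolding mtrace_def by (simp add: Re_sum[symmetric])
  then have "Re (P $$ (i, i)) = 0"
    using sum_nonneg_eq_0_iff[of "{..<d}" "\<lambda>k. Re (P $$ (k, k))"] nn ij by simp
  then have "(cmod (P $$ (i, j)))\<^sup>2 \<le> 0"
    using psd_on_entry_sq_le[OF p ij] by (simp add: entries_def)
  then show ?thesis by simp
qed

lemma blk_id: "X \<in> carrier_mat d d \<Longrightarrow> blk d X 0 0 = X"
  unfolding blk_def by (rule eq_matI) auto

lemma channel_carrier: "channel d m L \<Longrightarrow> A \<in> carrier_mat d d \<Longrightarrow> L A \<in> carrier_mat m m"
  unfolding channel_def by blast

lemma channel_psd:
  assumes L: "channel d m L" and X: "psd d X"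
  shows "psd m (L X)"
proof -
  have Xc: "X \<in> carrier_mat d d" using X by (simp add: psd_def)
  have "\<forall>k X. psd (k * d) X \<longrightarrow> psd (k * m) (ampl k d m L X)" using L unfolding channel_def by blast
  then have "psd (1 * d) X \<longrightarrow> psd (1 * m) (ampl 1 d m L X)" by blast
  then have "psd (1 * m) (ampl 1 d m L X)" using X by simp
  moreover have "ampl 1 d m L X = L X"
    unfolding ampl_def
    by (rule eq_matI) (use channel_carrier[OF L Xc] blk_id[OF Xc] in auto)
  ultimately show ?thesis by simp
qed

lemma channel_linear:
  assumes L: "channel d m L" "A \<in> carrier_mat d d" "B \<in> carrier_mat d d"
  shows "L (c \<cdot>\<^sub>m A + B) = c \<cdot>\<^sub>m L A + L B"
  using assms unfolding channel_def by blast

lemma channel_zero: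
  assumes L: "channel d m L" and ab: "a < m" "b < m"
  shows "L (0\<^sub>m d d) $$ (a, b) = 0"
proof -
  have z: "0\<^sub>m d d \<in> carrier_mat d d" by simp
  have "1 \<cdot>\<^sub>m 0\<^sub>m d d + 0\<^sub>m d d = (0\<^sub>m d d :: complex mat)" by (rule eq_matI) auto
  then have "L (0\<^sub>m d d) = 1 \<cdot>\<^sub>m L (0\<^sub>m d d) + L (0\<^sub>m d d)"
    using channel_linear[OF L z z, of 1] by simp
  then have "L (0\<^sub>m d d) $$ (a, b) = (1 \<cdot>\<^sub>m L (0\<^sub>m d d) + L (0\<^sub>m d d)) $$ (a, b)" by simp
  also have "\<dots> = L (0\<^sub>m d d) $$ (a, b) + L (0\<^sub>m d d) $$ (a, b)"
    using channel_carrier[OF L z] ab by simp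
  finally show ?thesis by simp
qed

lemma channel_mixture_entry:
  assumes L: "channel d m L" and r: "\<rho> \<in> carrier_mat d d" and t: "\<tau> \<in> carrier_mat d d"
    and ab: "a < m" "b < m"
  shows "L (complex_of_real c \<cdot>\<^sub>m (\<rho> + complex_of_real s \<cdot>\<^sub>m \<tau>)) $$ (a, b)
     = complex_of_real c * (complex_of_real s * L \<tau> $$ (a, b) + L \<rho> $$ (a, b))"
proof -
  let ?Q = "\<rho> + complex_of_real s \<cdot>\<^sub>m \<tau>"
  have Q: "?Q \<in> carrier_mat d d" using r t by simp
  have z: "0\<^sub>m d d \<in> carrier_mat d d" by simp
  have e1: "complex_of_real c \<cdot>\<^sub>m ?Q = complex_of_real c \<cdot>\<^sub>m ?Q + 0\<^sub>m d d" using Q by simp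
  have e2: "?Q = complex_of_real s \<cdot>\<^sub>m \<tau> + \<rho>" by (rule comm_add_mat) (use r t in auto)
  have "L (complex_of_real c \<cdot>\<^sub>m ?Q) = complex_of_real c \<cdot>\<^sub>m L ?Q + L (0\<^sub>m d d)"
    by (subst e1, rule channel_linear[OF L Q z])
  moreover have "L ?Q = complex_of_real s \<cdot>\<^sub>m L \<tau> + L \<rho>"
    by (subst e2, rule channel_linear[OF L t r])
  ultimately show ?thesis
    using channel_carrier[OF L r] channel_carrier[OF L t] channel_carrier[OF L Q] channel_carrier[OF L z] channel_zero[OF L ab] ab
    by simp
qed

lemma channel_id: "channel d d (\<lambda>A. A)"
proof -
  have "ampl k d d (\<lambda>A. A) X = X" if X: "X \<in> carrier_mat (k * d) (k * d)" for k X
  proof (rule eq_matI)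
    fix i j assume "i < dim_row X" "j < dim_col X"
    then have ij: "i < k * d" "j < k * d" using X by auto
    then have d: "0 < d" by (cases d) auto
    have "i mod d < d" "j mod d < d" using d by auto
    then show "ampl k d d (\<lambda>A. A) X $$ (i, j) = X $$ (i, j)"
      unfolding ampl_def blk_def using ij by (simp add: mult.commute[of "i div d"] mult.commute[of "j div d"])
  qed (use X in \<open>auto simp: ampl_def\<close>)
  then show ?thesis unfolding channel_def by (auto simp: psd_def)
qed

lemma channel_ensemble_id: "channel_ensemble d d 2 (\<lambda>i. if i = 0 then 1 else 0) (\<lambda>i A. A)"
  unfolding channel_ensemble_def using channel_id by (simp add: numeral_2_eq_2)

lemma povm_psd: "povm m N M \<Longrightarrow> i < N \<Longrightarrow> psd m (M i)"
  unfolding povm_def by blast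

lemma p_succ_nonneg:
  assumes ens: "channel_ensemble d m N p L" and P: "povm m N M" and w: "psd d \<omega>"
  shows "0 \<le> p_succ \<omega> N p L M"
  unfolding p_succ_def
proof (rule sum_nonneg)
  fix i assume "i \<in> {..<N}"
  then have i: "i < N" by simp
  have "channel d m (L i)" "0 \<le> p i" using ens i unfolding channel_ensemble_def by auto
  then show "0 \<le> p i * Re (mtrace (M i * L i \<omega>))"
    using trace_mult_psd_nonneg[OF povm_psd[OF P i] channel_psd[OF _ w]] by simp
qed

lemma trace_channel_le_mixture:
  assumes L: "channel d m L" and M: "psd m M"
    and r: "\<rho> \<in> density d" and ta: "\<tau> \<in> density d" and t: "0 \<le> t"
  shows "Re (mtrace (M * L \<rho>))
    \<le> (1 + t) * Re (mtrace (M * L (complex_of_real (1 / (1 + t)) \<cdot>\<^sub>m (\<rho> + complex_of_real t \<cdot>\<^sub>m \<tau>))))"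
proof -
  let ?\<sigma> = "complex_of_real (1 / (1 + t)) \<cdot>\<^sub>m (\<rho> + complex_of_real t \<cdot>\<^sub>m \<tau>)"
  have rc: "\<rho> \<in> carrier_mat d d" and tc: "\<tau> \<in> carrier_mat d d" using r ta density_carrier by auto
  have sc: "?\<sigma> \<in> carrier_mat d d" using rc tc by simp
  have Mc: "M \<in> carrier_mat m m" using M by (simp add: psd_def)
  have Lr: "L \<rho> \<in> carrier_mat m m" "L \<tau> \<in> carrier_mat m m" "L ?\<sigma> \<in> carrier_mat m m"
    using channel_carrier[OF L] rc tc sc by auto
  have entry: "L \<rho> $$ (b, a) = complex_of_real (1 + t) * L ?\<sigma> $$ (b, a) - complex_of_real t * L \<tau> $$ (b, a)"
    if "a < m" "b < m" for a b
  proof -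
    have "L ?\<sigma> $$ (b, a) = complex_of_real (1 / (1 + t)) * (complex_of_real t * L \<tau> $$ (b, a) + L \<rho> $$ (b, a))"
      by (rule channel_mixture_entry[OF L rc tc that(2) that(1)])
    moreover have "complex_of_real (1 + t) \<noteq> 0" using t by (simp add: complex_eq_iff)
    ultimately show ?thesis using t by (simp add: field_simps)
  qed
  have "mtrace (M * L \<rho>) = complex_of_real (1 + t) * mtrace (M * L ?\<sigma>) - complex_of_real t * mtrace (M * L \<tau>)"
    unfolding mtrace_mult[OF Mc Lr(1)] mtrace_mult[OF Mc Lr(2)] mtrace_mult[OF Mc Lr(3)]
    by (simp add: entry algebra_simps sum_distrib_left sum_subtractf)
  then have "Re (mtrace (M * L \<rho>)) = (1 + t) * Re (mtrace (M * L ?\<sigma>)) - t * Re (mtrace (M * L \<tau>))"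
    by simp
  moreover have "0 \<le> Re (mtrace (M * L \<tau>))"
    by (rule trace_mult_psd_nonneg[OF M channel_psd[OF L density_psd[OF ta]]])
  ultimately show ?thesis using t by (simp add: mult_nonneg_nonneg)
qed

lemma p_succ_le_mixture:
  assumes ens: "channel_ensemble d m N p L" and P: "povm m N M"
    and r: "\<rho> \<in> density d" and ta: "\<tau> \<in> density d" and t: "0 \<le> t"
  shows "p_succ \<rho> N p L M \<le> (1 + t) * p_succ (complex_of_real (1 / (1 + t)) \<cdot>\<^sub>m (\<rho> + complex_of_real t \<cdot>\<^sub>m \<tau>)) N p L M"
proof -
  let ?\<sigma> = "complex_of_real (1 / (1 + t)) \<cdot>\<^sub>m (\<rho> + complex_of_real t \<cdot>\<^sub>m \<tau>)"
  have "Re (mtrace (M i * L i \<rho>)) \<le> (1 + t) * Re (mtrace (M i * L i ?\<sigma>))" if "i < N" for i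
    using ens that trace_channel_le_mixture[OF _ povm_psd[OF P that] r ta t]
    unfolding channel_ensemble_def by blast
  then have "p_succ \<rho> N p L M \<le> (\<Sum>i<N. p i * ((1 + t) * Re (mtrace (M i * L i ?\<sigma>))))"
    unfolding p_succ_def
    by (intro sum_mono) (use ens in \<open>auto simp: channel_ensemble_def intro: mult_left_mono\<close>)
  also have "\<dots> = (1 + t) * p_succ ?\<sigma> N p L M"
    unfolding p_succ_def by (simp add: sum_distrib_left algebra_simps)
  finally show ?thesis .
qed

definition robustness_feasible :: "nat \<Rightarrow> complex mat set \<Rightarrow> complex mat \<Rightarrow> real \<Rightarrow> bool" where
  "robustness_feasible d F \<rho> s \<longleftrightarrow>
     (\<exists>\<tau> \<in> density d. complex_of_real (1 / (1 + s)) \<cdot>\<^sub>m (\<rho> + complex_of_real s \<cdot>\<^sub>m \<tau>) \<in> F)"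

lemma gen_robustness_feasible:
  "gen_robustness d F \<rho> = Inf {ereal s | s. 0 \<le> s \<and> robustness_feasible d F \<rho> s}"
  unfolding gen_robustness_def robustness_feasible_def ..

lemma gen_robustness_nonneg: "0 \<le> gen_robustness d F \<rho>"
  unfolding gen_robustness_def by (rule Inf_greatest) auto

lemma gen_robustness_UNION:
  "gen_robustness d (\<Union>k\<in>K. F k) \<rho> = (INF k\<in>K. gen_robustness d (F k) \<rho>)"
proof -
  define T where "T k = {ereal s | s. 0 \<le> s \<and> robustness_feasible d (F k) \<rho> s}" for k
  have "{ereal s | s. 0 \<le> s \<and> robustness_feasible d (\<Union>k\<in>K. F k) \<rho> s} = (\<Union>k\<in>K. T k)"
    unfolding T_def robustness_feasible_def by blast
  moreover have "Inf (\<Union>k\<in>K. T k) = (INF k\<in>K. Inf (T k))"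
  proof (rule antisym)
    show "Inf (\<Union>k\<in>K. T k) \<le> (INF k\<in>K. Inf (T k))"
      by (rule INF_greatest, rule Inf_superset_mono) auto
    show "(INF k\<in>K. Inf (T k)) \<le> Inf (\<Union>k\<in>K. T k)"
      by (rule Inf_greatest) (blast intro: INF_lower2 Inf_lower)
  qed
  ultimately show ?thesis unfolding gen_robustness_feasible T_def by simp
qed

lemma robustness_feasible_zero_imp_mem:
  assumes \<rho>: "\<rho> \<in> carrier_mat d d" and feas: "robustness_feasible d F \<rho> 0"
  shows "\<rho> \<in> F"
proof -
  obtain \<tau> where \<tau>: "\<tau> \<in> density d"
    and mix: "complex_of_real (1 / (1 + 0)) \<cdot>\<^sub>m (\<rho> + complex_of_real 0 \<cdot>\<^sub>m \<tau>) \<in> F"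
    using feas unfolding robustness_feasible_def by blast
  have "complex_of_real (1 / (1 + 0)) \<cdot>\<^sub>m (\<rho> + complex_of_real 0 \<cdot>\<^sub>m \<tau>) = \<rho>"
    using \<rho> density_carrier[OF \<tau>] by (intro eq_matI) auto
  then show ?thesis using mix by simp
qed

lemma ereal_divide_le:
  fixes a c :: real and D :: ereal
  assumes a: "0 \<le> a" and D: "0 \<le> D" and le: "ereal a \<le> ereal c * D" and c: "0 \<le> c"
  shows "ereal a / D \<le> ereal c"
proof (cases D)
  case (real r)
  then have r: "0 \<le> r" using D by simp
  show ?thesis
  proof (cases "r = 0")
    case True
    then have "a = 0" using le a real by simp
    then show ?thesis using True real c by simp
  next
    case False
    then have "a \<le> c * r" "r > 0" using le real r by auto
    then have "a / r \<le> c" by (simp add: divide_le_eq mult.commute)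
    then show ?thesis using real False by simp
  qed
next
  case PInf then show ?thesis using c by simp
next
  case MInf then show ?thesis using D by simp
qed

lemma succ_ratio_le_feasible:
  assumes sub: "Fk \<subseteq> density d" and r: "\<rho> \<in> density d" and t: "0 \<le> t"
    and feas: "robustness_feasible d Fk \<rho> t"
  shows "succ_ratio d Fk \<rho> \<le> ereal (1 + t)"
proof -
  obtain \<tau> where ta: "\<tau> \<in> density d"
    and s: "complex_of_real (1 / (1 + t)) \<cdot>\<^sub>m (\<rho> + complex_of_real t \<cdot>\<^sub>m \<tau>) \<in> Fk"
    using feas unfolding robustness_feasible_def by blast
  show ?thesis
    unfolding succ_ratio_def
  proof (rule Sup_least)
    fix x assume "x \<in> {ereal (p_succ \<rho> N p L M) / (SUP \<sigma> \<in> Fk. ereal (p_succ \<sigma> N p L M)) | N m p L M.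
        channel_ensemble d m N p L \<and> povm m N M}"
    then obtain N m p L M where x: "x = ereal (p_succ \<rho> N p L M) / (SUP \<sigma> \<in> Fk. ereal (p_succ \<sigma> N p L M))"
      and ens: "channel_ensemble d m N p L" and P: "povm m N M" by blast
    let ?\<sigma> = "complex_of_real (1 / (1 + t)) \<cdot>\<^sub>m (\<rho> + complex_of_real t \<cdot>\<^sub>m \<tau>)"
    let ?D = "SUP \<sigma> \<in> Fk. ereal (p_succ \<sigma> N p L M)"
    have Dge: "ereal (p_succ ?\<sigma> N p L M) \<le> ?D" using s by (rule SUP_upper)
    have s0: "0 \<le> p_succ ?\<sigma> N p L M" using p_succ_nonneg[OF ens P density_psd] s sub by blast
    have D0: "0 \<le> ?D" using Dge s0 by (meson ereal_less_eq(5) order_trans)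
    have "ereal (p_succ \<rho> N p L M) \<le> ereal ((1 + t) * p_succ ?\<sigma> N p L M)"
      using p_succ_le_mixture[OF ens P r ta t] by simp
    also have "\<dots> = ereal (1 + t) * ereal (p_succ ?\<sigma> N p L M)" by simp
    also have "\<dots> \<le> ereal (1 + t) * ?D" using Dge t by (intro ereal_mult_left_mono) auto
    finally show "x \<le> ereal (1 + t)" unfolding x
      using ereal_divide_le[OF p_succ_nonneg[OF ens P density_psd[OF r]] D0] t by simp
  qed
qed

lemma real_seq_convergent_subseq:
  fixes x :: "nat \<Rightarrow> real"
  assumes "\<And>n. \<bar>x n\<bar> \<le> B"
  shows "\<exists>r. strict_mono r \<and> convergent (\<lambda>n. x (r n))"
proof -
  obtain r where r: "strict_mono r" "monoseq (\<lambda>n. x (r n))"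
    using seq_monosub by blast
  have "Bseq (\<lambda>n. x (r n))" using assms by (intro BseqI'[of _ B]) auto
  then show ?thesis using r Bseq_monoseq_convergent by blast
qed

lemma complex_seq_convergent_subseq:
  fixes x :: "nat \<Rightarrow> complex"
  assumes x: "\<And>n. cmod (x n) \<le> B"
  shows "\<exists>r. strict_mono r \<and> convergent (\<lambda>n. x (r n))"
proof -
  have bRe: "\<bar>Re (x n)\<bar> \<le> B" and bIm: "\<bar>Im (x n)\<bar> \<le> B" for n
    using abs_Re_le_cmod[of "x n"] abs_Im_le_cmod[of "x n"] x[of n] by linarith+
  obtain r1 where r1: "strict_mono r1" "convergent (\<lambda>n. Re (x (r1 n)))"
    using real_seq_convergent_subseq[of "\<lambda>n. Re (x n)" B] bRe by blast
  obtain r2 where r2: "strict_mono r2" "convergent (\<lambda>n. Im (x (r1 (r2 n))))"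
    using real_seq_convergent_subseq[of "\<lambda>n. Im (x (r1 n))" B] bIm by blast
  have "convergent (\<lambda>n. Re (x (r1 (r2 n))))"
    using convergent_subseq_convergent[OF r1(2) r2(1)] by (simp add: o_def)
  then obtain a b where "(\<lambda>n. Re (x (r1 (r2 n)))) \<longlonglongrightarrow> a" "(\<lambda>n. Im (x (r1 (r2 n)))) \<longlonglongrightarrow> b"
    using r2(2) unfolding convergent_def by blast
  then have "(\<lambda>n. Complex (Re (x (r1 (r2 n)))) (Im (x (r1 (r2 n))))) \<longlonglongrightarrow> Complex a b"
    by (rule tendsto_Complex)
  then have "(\<lambda>n. x ((r1 \<circ> r2) n)) \<longlonglongrightarrow> Complex a b" by simp
  then show ?thesis using strict_mono_o[OF r1(1) r2(1)] unfolding convergent_def by blast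
qed

lemma finite_family_convergent_subseq:
  fixes x :: "nat \<Rightarrow> 'i \<Rightarrow> complex"
  assumes "finite I" "\<And>n i. i \<in> I \<Longrightarrow> cmod (x n i) \<le> B"
  shows "\<exists>r. strict_mono r \<and> (\<forall>i\<in>I. convergent (\<lambda>n. x (r n) i))"
  using assms
proof (induction I rule: finite_induct)
  case empty
  show ?case by (rule exI[of _ id]) (simp add: strict_mono_def)
next
  case (insert a I)
  obtain r where r: "strict_mono r" "\<forall>i\<in>I. convergent (\<lambda>n. x (r n) i)"
    using insert by auto
  obtain r2 where r2: "strict_mono r2" "convergent (\<lambda>n. x (r (r2 n)) a)"
    using complex_seq_convergent_subseq[of "\<lambda>n. x (r n) a" B] insert.prems by auto
  have "convergent (\<lambda>n. x (r (r2 n)) i)" if "i \<in> I" for i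
    using convergent_subseq_convergent[OF r(2)[rule_format, OF that] r2(1)] by (simp add: o_def)
  then show ?case
    using r2 strict_mono_o[OF r(1) r2(1)] by (intro exI[of _ "r \<circ> r2"]) (auto simp: o_def)
qed

lemma mat_seq_convergent_subseq:
  fixes X :: "nat \<Rightarrow> complex mat"
  assumes "\<And>n i j. i < d \<Longrightarrow> j < d \<Longrightarrow> cmod (X n $$ (i, j)) \<le> B"
  obtains r A where "strict_mono r" "A \<in> carrier_mat d d"
    "\<And>i j. i < d \<Longrightarrow> j < d \<Longrightarrow> (\<lambda>n. X (r n) $$ (i, j)) \<longlonglongrightarrow> A $$ (i, j)"
proof -
  obtain r where r: "strict_mono r" "\<forall>ij\<in>{..<d} \<times> {..<d}. convergent (\<lambda>n. X (r n) $$ ij)"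
    using finite_family_convergent_subseq[of "{..<d} \<times> {..<d}" "\<lambda>n ij. X n $$ ij" B] assms
    by auto
  define A where "A = mat d d (\<lambda>ij. lim (\<lambda>n. X (r n) $$ ij))"
  have "(\<lambda>n. X (r n) $$ (i, j)) \<longlonglongrightarrow> A $$ (i, j)" if "i < d" "j < d" for i j
    using r(2) that unfolding A_def convergent_LIMSEQ_iff by auto
  moreover have "A \<in> carrier_mat d d" unfolding A_def by simp
  ultimately show ?thesis using that r(1) by blast
qed

(* As \<sigma> ranges over F_k and P over positive semidefinite matrices, (1 + s) \<sigma> - P ranges over
   the closed convex set (1 + s) F_k - PSD; resid_sqnorm is the squared Frobenius distance
   of \<rho> to the point (1 + s) \<sigma> - P. *)
definition resid :: "real \<Rightarrow> complex mat \<Rightarrow> complex mat \<Rightarrow> complex mat \<Rightarrow> nat \<Rightarrow> nat \<Rightarrow> complex" where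
  "resid s \<rho> \<sigma> P i j = complex_of_real (1 + s) * \<sigma> $$ (i, j) - \<rho> $$ (i, j) - P $$ (i, j)"

definition resid_sqnorm :: "nat \<Rightarrow> real \<Rightarrow> complex mat \<Rightarrow> complex mat \<Rightarrow> complex mat \<Rightarrow> real" where
  "resid_sqnorm d s \<rho> \<sigma> P = (\<Sum>i<d. \<Sum>j<d. (cmod (resid s \<rho> \<sigma> P i j))\<^sup>2)"

lemma resid_sqnorm_nonneg: "0 \<le> resid_sqnorm d s \<rho> \<sigma> P"
  unfolding resid_sqnorm_def by (intro sum_nonneg) auto

lemma resid_entry_le_sqnorm: "i < d \<Longrightarrow> j < d \<Longrightarrow> (cmod (resid s \<rho> \<sigma> P i j))\<^sup>2 \<le> resid_sqnorm d s \<rho> \<sigma> P"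
proof -
  assume ij: "i < d" "j < d"
  have "(cmod (resid s \<rho> \<sigma> P i j))\<^sup>2 \<le> (\<Sum>j'<d. (cmod (resid s \<rho> \<sigma> P i j'))\<^sup>2)"
    by (rule member_le_sum) (use ij in auto)
  also have "\<dots> \<le> resid_sqnorm d s \<rho> \<sigma> P" unfolding resid_sqnorm_def
    by (rule member_le_sum[of i "{..<d}" "\<lambda>i. \<Sum>j'<d. (cmod (resid s \<rho> \<sigma> P i j'))\<^sup>2"]) (use ij in \<open>auto intro: sum_nonneg\<close>)
  finally show ?thesis .
qed

lemma cmod_le_one_plus_sq: "cmod z \<le> 1 + (cmod z)\<^sup>2"
proof -
  have "0 \<le> (cmod z - 1)\<^sup>2" by simp
  then show ?thesis by (simp add: power2_eq_square algebra_simps) (smt (verit) norm_ge_zero)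
qed

lemma psd_entry_le_of_resid_sqnorm:
  assumes \<sigma>: "\<sigma> \<in> density d" and \<rho>: "\<rho> \<in> density d" and s: "0 \<le> s"
    and c: "resid_sqnorm d s \<rho> \<sigma> P \<le> c" and ij: "i < d" "j < d"
  shows "cmod (P $$ (i, j)) \<le> (1 + s) + 1 + (1 + c)"
proof -
  let ?a = "complex_of_real (1 + s) * \<sigma> $$ (i, j)" and ?z = "resid s \<rho> \<sigma> P i j"
  have "cmod (P $$ (i, j)) = cmod (?a - \<rho> $$ (i, j) - ?z)"
    unfolding resid_def by (simp add: algebra_simps)
  also have "\<dots> \<le> cmod ?a + cmod (\<rho> $$ (i, j)) + cmod ?z"
    using norm_triangle_ineq4[of "?a - \<rho> $$ (i, j)" ?z] norm_triangle_ineq4[of ?a "\<rho> $$ (i, j)"]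
    by linarith
  also have "\<dots> \<le> (1 + s) + 1 + (1 + c)"
  proof (intro add_mono)
    have "cmod ?a = \<bar>1 + s\<bar> * cmod (\<sigma> $$ (i, j))"
      by (subst norm_mult, subst norm_of_real) (rule refl)
    also have "\<dots> = (1 + s) * cmod (\<sigma> $$ (i, j))" using s by simp
    also have "\<dots> \<le> (1 + s) * 1"
      using density_entry_bound[OF \<sigma> ij] s by (intro mult_left_mono) auto
    finally show "cmod ?a \<le> 1 + s" by simp
    show "cmod (\<rho> $$ (i, j)) \<le> 1" by (rule density_entry_bound[OF \<rho> ij])
    show "cmod ?z \<le> 1 + c"
      using cmod_le_one_plus_sq[of ?z] resid_entry_le_sqnorm[OF ij, of s \<rho> \<sigma> P] c by linarith
  qed
  finally show ?thesis .
qed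

definition nearest_pair ::
    "nat \<Rightarrow> complex mat set \<Rightarrow> real \<Rightarrow> complex mat \<Rightarrow> complex mat \<Rightarrow> complex mat \<Rightarrow> bool" where
  "nearest_pair d Fk s \<rho> \<sigma>0 P0 \<longleftrightarrow> \<sigma>0 \<in> Fk \<and> psd d P0 \<and>
     (\<forall>\<sigma>\<in>Fk. \<forall>P. psd d P \<longrightarrow> resid_sqnorm d s \<rho> \<sigma>0 P0 \<le> resid_sqnorm d s \<rho> \<sigma> P)"

(* Along a sequence with bounded residual, P stays bounded as well (states have entries of
   modulus at most 1), so compactness and closedness of F_k give a convergent subsequence. *)
lemma resid_sqnorm_convergent_subseq:
  fixes S Ps :: "nat \<Rightarrow> complex mat"
  assumes sub: "Fk \<subseteq> density d" and cl: "mat_closed d Fk" and r: "\<rho> \<in> density d" and s: "0 \<le> s"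
    and S: "\<And>n. S n \<in> Fk" and Ps: "\<And>n. psd d (Ps n)"
    and bound: "\<And>n. resid_sqnorm d s \<rho> (S n) (Ps n) \<le> c"
  shows "\<exists>r \<sigma>0 P0. strict_mono r \<and> \<sigma>0 \<in> Fk \<and> psd d P0 \<and>
    (\<lambda>n. resid_sqnorm d s \<rho> (S (r n)) (Ps (r n))) \<longlonglongrightarrow> resid_sqnorm d s \<rho> \<sigma>0 P0"
proof -
  have Sb: "cmod (S n $$ (i, j)) \<le> 1" if "i < d" "j < d" for n i j
    using density_entry_bound[of "S n" d i j] S[of n] sub that by blast
  obtain r1 \<sigma>0 where r1: "strict_mono r1" and \<sigma>0c: "\<sigma>0 \<in> carrier_mat d d"
    and limS: "\<And>i j. i < d \<Longrightarrow> j < d \<Longrightarrow> (\<lambda>n. S (r1 n) $$ (i, j)) \<longlonglongrightarrow> \<sigma>0 $$ (i, j)"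
    using mat_seq_convergent_subseq[where X = S, OF Sb] by blast
  have Pb: "cmod (Ps (r1 n) $$ (i, j)) \<le> (1 + s) + 1 + (1 + c)" if "i < d" "j < d" for n i j
    using psd_entry_le_of_resid_sqnorm[OF _ r s bound that] S sub by blast
  obtain r2 P0 where r2: "strict_mono r2" and P0c: "P0 \<in> carrier_mat d d"
    and limP: "\<And>i j. i < d \<Longrightarrow> j < d \<Longrightarrow> (\<lambda>n. Ps (r1 (r2 n)) $$ (i, j)) \<longlonglongrightarrow> P0 $$ (i, j)"
    using mat_seq_convergent_subseq[where X = "\<lambda>n. Ps (r1 n)", OF Pb] by blast
  define r where "r = r1 \<circ> r2"
  have r: "strict_mono r" unfolding r_def using r1 r2 by (rule strict_mono_o)
  have limS': "(\<lambda>n. S (r n) $$ (i, j)) \<longlonglongrightarrow> \<sigma>0 $$ (i, j)" if "i < d" "j < d" for i j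
    using LIMSEQ_subseq_LIMSEQ[OF limS[OF that] r2] unfolding r_def by (simp add: o_def)
  have limP': "(\<lambda>n. Ps (r n) $$ (i, j)) \<longlonglongrightarrow> P0 $$ (i, j)" if "i < d" "j < d" for i j
    using limP[OF that] unfolding r_def by (simp add: o_def)
  have "\<sigma>0 \<in> Fk"
    using cl[unfolded mat_closed_def, rule_format, of "\<lambda>n. S (r n)" \<sigma>0] S \<sigma>0c limS' by blast
  moreover have "psd d P0"
    by (rule psd_limit[where X="\<lambda>n. Ps (r n)"]) (use Ps P0c limP' in auto)
  moreover have "(\<lambda>n. resid_sqnorm d s \<rho> (S (r n)) (Ps (r n))) \<longlonglongrightarrow> resid_sqnorm d s \<rho> \<sigma>0 P0"
    unfolding resid_sqnorm_def resid_def
    by (intro tendsto_sum tendsto_power tendsto_norm tendsto_diff tendsto_mult tendsto_const limS' limP') auto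
  ultimately show ?thesis using r by blast
qed

lemma nearest_pair_exists:
  assumes sub: "Fk \<subseteq> density d" and ne: "Fk \<noteq> {}" and cl: "mat_closed d Fk"
    and r: "\<rho> \<in> density d" and s: "0 \<le> s"
  obtains \<sigma>0 P0 where "nearest_pair d Fk s \<rho> \<sigma>0 P0"
proof -
  let ?G = "{resid_sqnorm d s \<rho> \<sigma> P | \<sigma> P. \<sigma> \<in> Fk \<and> psd d P}"
  define m0 where "m0 = Inf ?G"
  obtain \<sigma>1 where "\<sigma>1 \<in> Fk" using ne by blast
  then have Gne: "?G \<noteq> {}" using psd_zero by blast
  have Gbdd: "bdd_below ?G" by (rule bdd_belowI[of _ 0]) (auto simp: resid_sqnorm_nonneg)
  have lower: "m0 \<le> resid_sqnorm d s \<rho> \<sigma> P" if "\<sigma> \<in> Fk" "psd d P" for \<sigma> P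
    unfolding m0_def by (rule cInf_lower[OF _ Gbdd]) (use that in blast)
  have "\<exists>\<sigma> P. \<sigma> \<in> Fk \<and> psd d P \<and> resid_sqnorm d s \<rho> \<sigma> P < m0 + inverse (real (Suc n))" for n
  proof -
    have "Inf ?G < m0 + inverse (real (Suc n))" unfolding m0_def by simp
    then obtain x where "x \<in> ?G" "x < m0 + inverse (real (Suc n))" using cInf_lessD[OF Gne] by blast
    then show ?thesis by blast
  qed
  then obtain S Ps where S: "\<And>n. S n \<in> Fk" and Ps: "\<And>n. psd d (Ps n)"
    and close: "\<And>n. resid_sqnorm d s \<rho> (S n) (Ps n) < m0 + inverse (real (Suc n))"
    by metis
  have bound: "resid_sqnorm d s \<rho> (S n) (Ps n) \<le> m0 + 1" for n
  proof -
    have "inverse (real (Suc n)) \<le> 1" by (simp add: inverse_le_1_iff)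
    then show ?thesis using close[of n] by linarith
  qed
  from resid_sqnorm_convergent_subseq[where S = S and Ps = Ps, OF sub cl r s S Ps bound]
  obtain r \<sigma>0 P0 where r: "strict_mono r" and \<sigma>0: "\<sigma>0 \<in> Fk" and P0: "psd d P0"
    and lim: "(\<lambda>n. resid_sqnorm d s \<rho> (S (r n)) (Ps (r n))) \<longlonglongrightarrow> resid_sqnorm d s \<rho> \<sigma>0 P0"
    by blast
  have lim_bound: "(\<lambda>n. m0 + inverse (real (Suc n))) \<longlonglongrightarrow> m0"
    using tendsto_add[OF tendsto_const[of m0] LIMSEQ_inverse_real_of_nat] by simp
  have "resid_sqnorm d s \<rho> (S (r n)) (Ps (r n)) \<le> m0 + inverse (real (Suc n))" for n
  proof -
    have "n \<le> r n" using r by (rule seq_suble)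
    then have "inverse (real (Suc (r n))) \<le> inverse (real (Suc n))" by (intro le_imp_inverse_le) auto
    then show ?thesis using close[of "r n"] by linarith
  qed
  then have "resid_sqnorm d s \<rho> \<sigma>0 P0 \<le> m0" using LIMSEQ_le[OF lim lim_bound] by blast
  then have "nearest_pair d Fk s \<rho> \<sigma>0 P0"
    unfolding nearest_pair_def using \<sigma>0 P0 lower by (meson order_trans)
  then show ?thesis by (rule that)
qed

definition re_frob :: "nat \<Rightarrow> (nat \<Rightarrow> nat \<Rightarrow> complex) \<Rightarrow> (nat \<Rightarrow> nat \<Rightarrow> complex) \<Rightarrow> real" where
  "re_frob d W B = (\<Sum>i<d. \<Sum>j<d. Re (W i j * cnj (B i j)))"

lemma re_frob_entries:
  assumes "herm_on d (entries B)"
  shows "re_frob d W (entries B) = Re (\<Sum>i<d. \<Sum>j<d. W i j * B $$ (j, i))"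
proof -
  have "re_frob d W (entries B) = (\<Sum>i<d. \<Sum>j<d. Re (W i j * B $$ (j, i)))"
    unfolding re_frob_def
  proof (intro sum.cong refl)
    fix i j assume "i \<in> {..<d}" "j \<in> {..<d}"
    then have "entries B j i = cnj (entries B i j)" using herm_onD[OF assms, of i j] by blast
    then show "Re (W i j * cnj (entries B i j)) = Re (W i j * B $$ (j, i))" by (simp add: entries_def)
  qed
  then show ?thesis by (simp add: Re_sum)
qed

lemma nonneg_if_first_variation:
  fixes A B :: real
  assumes B: "0 \<le> B" and h: "\<And>t. 0 < t \<Longrightarrow> t \<le> 1 \<Longrightarrow> 0 \<le> 2 * t * A + t\<^sup>2 * B"
  shows "0 \<le> A"
proof (rule ccontr)
  assume "\<not> 0 \<le> A"
  then have A: "A < 0" by simp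
  define t where "t = min 1 (- A / (B + 1))"
  have "0 < - A / (B + 1)" using A B by (intro divide_pos_pos) auto
  then have t0: "0 < t" by (simp add: t_def)
  have t1: "t \<le> 1" by (simp add: t_def)
  have tB: "t * B \<le> - A" 
  proof -
    have "t \<le> - A / (B + 1)" by (simp add: t_def)
    then have "t * (B + 1) \<le> - A / (B + 1) * (B + 1)" using B by (intro mult_right_mono) auto
    then have "t * (B + 1) \<le> - A" using B by simp
    then show ?thesis using t0 by (simp add: algebra_simps)
  qed
  have "2 * t * A + t\<^sup>2 * B = t * (2 * A + t * B)" by (simp add: power2_eq_square algebra_simps)
  also have "\<dots> < 0" using t0 tB A by (intro mult_pos_neg) auto
  finally show False using h[OF t0 t1] by simp
qed

lemma cmod_add_scaled_sq:
  fixes a b :: complex and t :: real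
  shows "(cmod (a + complex_of_real t * b))\<^sup>2 = (cmod a)\<^sup>2 + 2 * t * Re (a * cnj b) + t\<^sup>2 * (cmod b)\<^sup>2"
  unfolding cmod_power2 by (simp add: power2_eq_square algebra_simps)

lemma resid_variational_ineq:
  assumes near: "nearest_pair d Fk s \<rho> \<sigma>0 P0" and sub: "Fk \<subseteq> density d" and cv: "mat_convex Fk"
    and sF: "\<sigma> \<in> Fk" and pP: "psd d P"
  shows "0 \<le> (\<Sum>i<d. \<Sum>j<d. Re (resid s \<rho> \<sigma>0 P0 i j * cnj (resid s \<rho> \<sigma> P i j - resid s \<rho> \<sigma>0 P0 i j)))"
proof -
  have s0: "\<sigma>0 \<in> Fk" and p0: "psd d P0"
    and min: "\<forall>\<sigma>\<in>Fk. \<forall>P. psd d P \<longrightarrow> resid_sqnorm d s \<rho> \<sigma>0 P0 \<le> resid_sqnorm d s \<rho> \<sigma> P"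
    using near unfolding nearest_pair_def by auto
  let ?z = "resid s \<rho> \<sigma>0 P0" and ?k = "resid s \<rho> \<sigma> P"
  define A where "A = (\<Sum>i<d. \<Sum>j<d. Re (?z i j * cnj (?k i j - ?z i j)))"
  define Bq where "Bq = (\<Sum>i<d. \<Sum>j<d. (cmod (?k i j - ?z i j))\<^sup>2)"
  have Bq: "0 \<le> Bq" unfolding Bq_def by (intro sum_nonneg) auto
  have sc: "\<sigma> \<in> carrier_mat d d" "\<sigma>0 \<in> carrier_mat d d" using sub sF s0 density_carrier by auto
  have pc: "P \<in> carrier_mat d d" "P0 \<in> carrier_mat d d" using pP p0 by (auto simp: psd_def)
  have "0 \<le> 2 * t * A + t\<^sup>2 * Bq" if t: "0 < t" "t \<le> 1" for t
  proof -
    let ?st = "complex_of_real t \<cdot>\<^sub>m \<sigma> + complex_of_real (1 - t) \<cdot>\<^sub>m \<sigma>0"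
    let ?Pt = "complex_of_real t \<cdot>\<^sub>m P + complex_of_real (1 - t) \<cdot>\<^sub>m P0"
    have st: "?st \<in> Fk" using cv sF s0 t unfolding mat_convex_def by auto
    have Pt: "psd d ?Pt" by (rule psd_nonneg_comb[OF pP p0]) (use t in auto)
    have ze: "resid s \<rho> ?st ?Pt i j = ?z i j + complex_of_real t * (?k i j - ?z i j)" if "i < d" "j < d" for i j
      using that sc pc unfolding resid_def by (simp add: algebra_simps)
    have sq: "(cmod (resid s \<rho> ?st ?Pt i j))\<^sup>2 = (cmod (?z i j))\<^sup>2 + 2 * t * Re (?z i j * cnj (?k i j - ?z i j)) + t\<^sup>2 * (cmod (?k i j - ?z i j))\<^sup>2"
      if "i < d" "j < d" for i j
      unfolding ze[OF that] by (rule cmod_add_scaled_sq)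
    have "resid_sqnorm d s \<rho> ?st ?Pt = resid_sqnorm d s \<rho> \<sigma>0 P0 + 2 * t * A + t\<^sup>2 * Bq"
    proof -
      have "resid_sqnorm d s \<rho> ?st ?Pt = (\<Sum>i<d. \<Sum>j<d. (cmod (?z i j))\<^sup>2 + 2 * t * Re (?z i j * cnj (?k i j - ?z i j)) + t\<^sup>2 * (cmod (?k i j - ?z i j))\<^sup>2)"
        unfolding resid_sqnorm_def by (intro sum.cong refl sq) auto
      also have "\<dots> = resid_sqnorm d s \<rho> \<sigma>0 P0 + 2 * t * A + t\<^sup>2 * Bq"
        unfolding resid_sqnorm_def A_def Bq_def by (simp add: sum.distrib sum_distrib_left)
      finally show ?thesis .
    qed
    moreover have "resid_sqnorm d s \<rho> \<sigma>0 P0 \<le> resid_sqnorm d s \<rho> ?st ?Pt" using min st Pt by blast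
    ultimately show ?thesis by linarith
  qed
  then have "0 \<le> A" using nonneg_if_first_variation[OF Bq] by blast
  then show ?thesis unfolding A_def .
qed

lemma nearest_pair_frob_psd_nonneg:
  assumes near: "nearest_pair d Fk s \<rho> \<sigma>0 P0" and sub: "Fk \<subseteq> density d" and cv: "mat_convex Fk"
    and Q: "psd d Q"
  shows "0 \<le> re_frob d (\<lambda>i j. - resid s \<rho> \<sigma>0 P0 i j) (entries Q)"
proof -
  let ?z = "resid s \<rho> \<sigma>0 P0"
  have s0: "\<sigma>0 \<in> Fk" and p0: "psd d P0" using near unfolding nearest_pair_def by auto
  have Qc: "Q \<in> carrier_mat d d" and pc: "P0 \<in> carrier_mat d d" using Q p0 by (auto simp: psd_def)
  have "0 \<le> (\<Sum>i<d. \<Sum>j<d. Re (?z i j * cnj (resid s \<rho> \<sigma>0 (P0 + Q) i j - ?z i j)))"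
    by (rule resid_variational_ineq[OF near sub cv s0 psd_add[OF p0 Q]])
  also have "\<dots> = re_frob d (\<lambda>i j. - ?z i j) (entries Q)" unfolding re_frob_def
  proof (intro sum.cong refl)
    fix i j assume "i \<in> {..<d}" "j \<in> {..<d}"
    then have "resid s \<rho> \<sigma>0 (P0 + Q) i j - ?z i j = - Q $$ (i, j)"
      using pc Qc unfolding resid_def by simp
    then show "Re (?z i j * cnj (resid s \<rho> \<sigma>0 (P0 + Q) i j - ?z i j)) = Re (- ?z i j * cnj (entries Q i j))"
      unfolding entries_def by simp
  qed
  finally show ?thesis .
qed

lemma Re_mult_cnj_shift:
  fixes z a b :: complex and c :: real
  shows "Re (z * cnj (complex_of_real c * a - b - z)) = Re (- z * cnj b) - c * Re (- z * cnj a) - (cmod z)\<^sup>2"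
  unfolding cmod_power2 by (simp add: algebra_simps power2_eq_square)

lemma nearest_pair_frob_gap:
  assumes near: "nearest_pair d Fk s \<rho> \<sigma>0 P0" and sub: "Fk \<subseteq> density d" and cv: "mat_convex Fk"
    and sF: "\<sigma> \<in> Fk"
  shows "(1 + s) * re_frob d (\<lambda>i j. - resid s \<rho> \<sigma>0 P0 i j) (entries \<sigma>) + resid_sqnorm d s \<rho> \<sigma>0 P0
    \<le> re_frob d (\<lambda>i j. - resid s \<rho> \<sigma>0 P0 i j) (entries \<rho>)"
proof -
  let ?z = "resid s \<rho> \<sigma>0 P0" and ?W = "\<lambda>i j. - resid s \<rho> \<sigma>0 P0 i j"
  have "0 \<le> (\<Sum>i<d. \<Sum>j<d. Re (?z i j * cnj (resid s \<rho> \<sigma> (0\<^sub>m d d) i j - ?z i j)))"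
    by (rule resid_variational_ineq[OF near sub cv sF psd_zero])
  also have "\<dots> = re_frob d ?W (entries \<rho>) - (1 + s) * re_frob d ?W (entries \<sigma>) - resid_sqnorm d s \<rho> \<sigma>0 P0"
  proof -
    have "Re (?z i j * cnj (resid s \<rho> \<sigma> (0\<^sub>m d d) i j - ?z i j))
        = Re (?W i j * cnj (entries \<rho> i j)) - (1 + s) * Re (?W i j * cnj (entries \<sigma> i j)) - (cmod (?z i j))\<^sup>2"
      if "i < d" "j < d" for i j
    proof -
      have zk: "resid s \<rho> \<sigma> (0\<^sub>m d d) i j = complex_of_real (1 + s) * \<sigma> $$ (i, j) - \<rho> $$ (i, j)"
        using that unfolding resid_def by simp
      show ?thesis unfolding zk entries_def by (rule Re_mult_cnj_shift)
    qed
    then have "(\<Sum>i<d. \<Sum>j<d. Re (?z i j * cnj (resid s \<rho> \<sigma> (0\<^sub>m d d) i j - ?z i j)))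
       = (\<Sum>i<d. \<Sum>j<d. Re (?W i j * cnj (entries \<rho> i j)) - (1 + s) * Re (?W i j * cnj (entries \<sigma> i j)) - (cmod (?z i j))\<^sup>2)"
      by (intro sum.cong refl) auto
    also have "\<dots> = re_frob d ?W (entries \<rho>) - (1 + s) * re_frob d ?W (entries \<sigma>) - resid_sqnorm d s \<rho> \<sigma>0 P0"
      unfolding re_frob_def resid_sqnorm_def by (simp only: sum_subtractf sum_distrib_left)
    finally show ?thesis .
  qed
  finally show ?thesis by simp
qed

lemma scaled_mixture_eq:
  assumes \<rho>: "\<rho> \<in> carrier_mat d d" and \<tau>: "\<tau> \<in> carrier_mat d d" and \<sigma>: "\<sigma> \<in> carrier_mat d d"
    and s: "0 \<le> s"
    and e: "\<And>i j. i < d \<Longrightarrow> j < d \<Longrightarrow>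
      complex_of_real (1 + s) * \<sigma> $$ (i, j) = \<rho> $$ (i, j) + complex_of_real s * \<tau> $$ (i, j)"
  shows "complex_of_real (1 / (1 + s)) \<cdot>\<^sub>m (\<rho> + complex_of_real s \<cdot>\<^sub>m \<tau>) = \<sigma>"
proof (rule eq_matI)
  fix i j assume "i < dim_row \<sigma>" "j < dim_col \<sigma>"
  then have ij: "i < d" "j < d" using \<sigma> by auto
  have "1 / (1 + s) * (1 + s) = 1" using s by simp
  then have inv: "complex_of_real (1 / (1 + s)) * complex_of_real (1 + s) = 1"
    by (metis of_real_1 of_real_mult)
  have "(complex_of_real (1 / (1 + s)) \<cdot>\<^sub>m (\<rho> + complex_of_real s \<cdot>\<^sub>m \<tau>)) $$ (i, j)
      = complex_of_real (1 / (1 + s)) * (\<rho> $$ (i, j) + complex_of_real s * \<tau> $$ (i, j))"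
    using ij \<rho> \<tau> by simp
  also have "\<dots> = (complex_of_real (1 / (1 + s)) * complex_of_real (1 + s)) * \<sigma> $$ (i, j)"
    unfolding e[OF ij, symmetric] by (simp only: mult.assoc)
  finally show "(complex_of_real (1 / (1 + s)) \<cdot>\<^sub>m (\<rho> + complex_of_real s \<cdot>\<^sub>m \<tau>)) $$ (i, j) = \<sigma> $$ (i, j)"
    unfolding inv by simp
qed (use \<rho> \<tau> \<sigma> in auto)

lemma resid_zero_imp_entry:
  "resid s \<rho> \<sigma> P i j = 0 \<Longrightarrow> P $$ (i, j) = complex_of_real (1 + s) * \<sigma> $$ (i, j) - \<rho> $$ (i, j)"
  unfolding resid_def by (simp add: algebra_simps)

lemma resid_zero_imp_trace:
  assumes r: "\<rho> \<in> density d" and s0: "\<sigma> \<in> density d" and pc: "P \<in> carrier_mat d d"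
    and z: "\<And>i j. i < d \<Longrightarrow> j < d \<Longrightarrow> resid s \<rho> \<sigma> P i j = 0"
  shows "mtrace P = complex_of_real s"
proof -
  have rc: "\<rho> \<in> carrier_mat d d" and sc: "\<sigma> \<in> carrier_mat d d" using r s0 density_carrier by auto
  have "mtrace P = (\<Sum>i<d. complex_of_real (1 + s) * \<sigma> $$ (i, i) - \<rho> $$ (i, i))"
    unfolding mtrace_def using pc z resid_zero_imp_entry by (intro sum.cong) auto
  also have "\<dots> = complex_of_real (1 + s) * mtrace \<sigma> - mtrace \<rho>"
    unfolding mtrace_def using sc rc by (simp add: sum_subtractf sum_distrib_left)
  finally show ?thesis using r s0 by (simp add: density_def)
qed

(* For s > 0 the witness is \<tau> = P / s; for s = 0 the trace forces P = 0, hence \<sigma> = \<rho>. *)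
lemma feasible_if_resid_zero:
  assumes r: "\<rho> \<in> density d" and s0: "\<sigma>0 \<in> density d" "\<sigma>0 \<in> F" and p0: "psd d P0" and s: "0 \<le> s"
    and z: "\<And>i j. i < d \<Longrightarrow> j < d \<Longrightarrow> resid s \<rho> \<sigma>0 P0 i j = 0"
  shows "robustness_feasible d F \<rho> s"
proof -
  have rc: "\<rho> \<in> carrier_mat d d" and sc: "\<sigma>0 \<in> carrier_mat d d" using r s0 density_carrier by auto
  have pc: "P0 \<in> carrier_mat d d" using p0 by (simp add: psd_def)
  have Pe: "P0 $$ (i, j) = complex_of_real (1 + s) * \<sigma>0 $$ (i, j) - \<rho> $$ (i, j)" if "i < d" "j < d" for i j
    using resid_zero_imp_entry z that by blast
  have trP: "mtrace P0 = complex_of_real s" by (rule resid_zero_imp_trace[OF r s0(1) pc z])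
  show ?thesis
  proof (cases "s = 0")
    case True
    have "P0 $$ (i, j) = 0" if "i < d" "j < d" for i j
      using psd_trace_zero_entry[OF p0 _ that] trP True by simp
    then have "complex_of_real (1 + s) * \<sigma>0 $$ (i, j) = \<rho> $$ (i, j) + complex_of_real s * \<rho> $$ (i, j)"
      if "i < d" "j < d" for i j
      using Pe[OF that] that True by simp
    then show ?thesis
      unfolding robustness_feasible_def using scaled_mixture_eq[OF rc rc sc s] r s0(2) by metis
  next
    case False
    let ?\<tau> = "complex_of_real (1 / s) \<cdot>\<^sub>m P0"
    have "psd d ?\<tau>" by (rule psd_smult[OF p0]) (use s in simp)
    moreover have "mtrace ?\<tau> = complex_of_real (1 / s) * mtrace P0"
      unfolding mtrace_def using pc by (simp add: sum_distrib_left)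
    ultimately have \<tau>: "?\<tau> \<in> density d" using trP False by (simp add: density_def)
    have e: "complex_of_real (1 + s) * \<sigma>0 $$ (i, j) = \<rho> $$ (i, j) + complex_of_real s * ?\<tau> $$ (i, j)"
      if "i < d" "j < d" for i j
    proof -
      have "complex_of_real s * ?\<tau> $$ (i, j) = complex_of_real (s * (1 / s)) * P0 $$ (i, j)"
        using that pc by (simp add: mult.assoc)
      then show ?thesis using False Pe[OF that] by simp
    qed
    have "?\<tau> \<in> carrier_mat d d" using pc by simp
    from scaled_mixture_eq[OF rc this sc s e] show ?thesis
      unfolding robustness_feasible_def using \<tau> s0(2) by metis
  qed
qed

lemma nearest_pair_witness_psd_on:
  assumes near: "nearest_pair d Fk s \<rho> \<sigma>0 P0" and sub: "Fk \<subseteq> density d" and cv: "mat_convex Fk"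
    and r: "\<rho> \<in> density d"
  shows "psd_on d (\<lambda>i j. - resid s \<rho> \<sigma>0 P0 i j)"
proof -
  let ?W = "\<lambda>i j. - resid s \<rho> \<sigma>0 P0 i j"
  have s0: "\<sigma>0 \<in> density d" and p0: "psd d P0" using near sub unfolding nearest_pair_def by auto
  have hP0: "herm_on d (entries P0)" using p0 psd_iff_psd_on psd_on_def by blast
  have "herm_on d ?W" unfolding herm_on_def
  proof (intro allI impI)
    fix i j assume ij: "i < d" "j < d"
    have "\<rho> $$ (j, i) = cnj (\<rho> $$ (i, j))" using herm_onD[OF density_herm[OF r] ij] by (simp add: entries_def)
    moreover have "\<sigma>0 $$ (j, i) = cnj (\<sigma>0 $$ (i, j))" using herm_onD[OF density_herm[OF s0] ij] by (simp add: entries_def)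
    moreover have "P0 $$ (j, i) = cnj (P0 $$ (i, j))" using herm_onD[OF hP0 ij] by (simp add: entries_def)
    ultimately show "?W j i = cnj (?W i j)" unfolding resid_def by simp
  qed
  moreover have "0 \<le> Re (quad_form d ?W v)" for v
  proof -
    have "re_frob d ?W (entries (outer_mat d v)) = (\<Sum>i<d. \<Sum>j<d. Re (cnj (v i) * ?W i j * v j))"
      unfolding re_frob_def entries_def outer_mat_def by (intro sum.cong refl) (simp add: algebra_simps)
    also have "\<dots> = Re (quad_form d ?W v)" unfolding quad_form_def by (simp add: Re_sum)
    finally show ?thesis using nearest_pair_frob_psd_nonneg[OF near sub cv psd_outer_mat[of d v]] by linarith
  qed
  ultimately show ?thesis unfolding psd_on_def by blast
qed

lemma robustness_separation:
  assumes sub: "Fk \<subseteq> density d" and ne: "Fk \<noteq> {}" and cl: "mat_closed d Fk" and cv: "mat_convex Fk"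
    and r: "\<rho> \<in> density d" and s: "0 \<le> s" and infeas: "\<not> robustness_feasible d Fk \<rho> s"
  obtains W where "psd_on d W" "\<And>Q. psd d Q \<Longrightarrow> 0 \<le> re_frob d W (entries Q)"
    "\<And>\<sigma>. \<sigma> \<in> Fk \<Longrightarrow> (1 + s) * re_frob d W (entries \<sigma>) < re_frob d W (entries \<rho>)"
proof -
  obtain \<sigma>0 P0 where near: "nearest_pair d Fk s \<rho> \<sigma>0 P0"
    using nearest_pair_exists[OF sub ne cl r s] by blast
  then have s0: "\<sigma>0 \<in> Fk" and p0: "psd d P0" unfolding nearest_pair_def by auto
  have gap: "0 < resid_sqnorm d s \<rho> \<sigma>0 P0"
  proof (rule ccontr)
    assume "\<not> 0 < resid_sqnorm d s \<rho> \<sigma>0 P0"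
    then have "(cmod (resid s \<rho> \<sigma>0 P0 i j))\<^sup>2 \<le> 0" if "i < d" "j < d" for i j
      using resid_entry_le_sqnorm[OF that, of s \<rho> \<sigma>0 P0] by linarith
    then have "resid s \<rho> \<sigma>0 P0 i j = 0" if "i < d" "j < d" for i j
      using that by simp
    then show False using feasible_if_resid_zero[OF r _ s0 p0 s] s0 sub infeas by blast
  qed
  show ?thesis
  proof (rule that)
    show "psd_on d (\<lambda>i j. - resid s \<rho> \<sigma>0 P0 i j)"
      by (rule nearest_pair_witness_psd_on[OF near sub cv r])
    show "0 \<le> re_frob d (\<lambda>i j. - resid s \<rho> \<sigma>0 P0 i j) (entries Q)" if "psd d Q" for Q
      by (rule nearest_pair_frob_psd_nonneg[OF near sub cv that])
    show "(1 + s) * re_frob d (\<lambda>i j. - resid s \<rho> \<sigma>0 P0 i j) (entries \<sigma>)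
        < re_frob d (\<lambda>i j. - resid s \<rho> \<sigma>0 P0 i j) (entries \<rho>)" if "\<sigma> \<in> Fk" for \<sigma>
      using nearest_pair_frob_gap[OF near sub cv that] gap by linarith
  qed
qed

lemma cmod_quad_form_le:
  fixes n :: nat
  shows "cmod (quad_form n W v) \<le> (\<Sum>i<n. \<Sum>j<n. cmod (W i j)) * (\<Sum>l<n. (cmod (v l))\<^sup>2)"
proof -
  let ?S = "\<Sum>l<n. (cmod (v l))\<^sup>2"
  have vs: "(cmod (v i))\<^sup>2 \<le> ?S" if "i < n" for i
    by (rule member_le_sum) (use that in auto)
  have ab: "cmod (v i) * cmod (v j) \<le> ?S" if "i < n" "j < n" for i j
  proof -
    have "2 * (cmod (v i) * cmod (v j)) \<le> (cmod (v i))\<^sup>2 + (cmod (v j))\<^sup>2"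
      using sum_squares_bound[of "cmod (v i)" "cmod (v j)"] by (simp add: power2_eq_square)
    then show ?thesis using vs[OF that(1)] vs[OF that(2)] by linarith
  qed
  have "cmod (quad_form n W v) \<le> (\<Sum>i<n. \<Sum>j<n. cmod (cnj (v i) * W i j * v j))"
    unfolding quad_form_def by (rule order_trans[OF norm_sum sum_mono[OF norm_sum]])
  also have "\<dots> \<le> (\<Sum>i<n. \<Sum>j<n. cmod (W i j) * ?S)"
  proof (intro sum_mono)
    fix i j assume "i \<in> {..<n}" "j \<in> {..<n}"
    then have "cmod (v i) * cmod (v j) \<le> ?S" using ab by simp
    then have "cmod (W i j) * (cmod (v i) * cmod (v j)) \<le> cmod (W i j) * ?S"
      by (intro mult_left_mono) auto
    then show "cmod (cnj (v i) * W i j * v j) \<le> cmod (W i j) * ?S"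
      by (simp add: norm_mult algebra_simps)
  qed
  also have "\<dots> = (\<Sum>i<n. \<Sum>j<n. cmod (W i j)) * ?S" by (simp add: sum_distrib_right)
  finally show ?thesis .
qed

lemma psd_on_scale:
  assumes p: "psd_on n A" and c: "0 \<le> c"
  shows "psd_on n (\<lambda>i j. complex_of_real c * A i j)"
proof -
  have h: "herm_on n A" using p by (simp add: psd_on_def)
  have "herm_on n (\<lambda>i j. complex_of_real c * A i j)"
    unfolding herm_on_def
  proof (intro allI impI)
    fix i j assume ij: "i < n" "j < n"
    show "complex_of_real c * A j i = cnj (complex_of_real c * A i j)" using herm_onD[OF h ij] by simp
  qed
  moreover have "quad_form n (\<lambda>i j. complex_of_real c * A i j) v = complex_of_real c * quad_form n A v" for v
    unfolding quad_form_def by (simp add: sum_distrib_left algebra_simps)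
  ultimately show ?thesis using p c unfolding psd_on_def by simp
qed

lemma psd_on_id_minus_scaled:
  assumes p: "psd_on n W" and e: "0 \<le> \<epsilon>" "\<epsilon> * (\<Sum>i<n. \<Sum>j<n. cmod (W i j)) \<le> 1"
  shows "psd_on n (\<lambda>i j. (if i = j then 1 else 0) - complex_of_real \<epsilon> * W i j)"
proof -
  have h: "herm_on n W" using p by (simp add: psd_on_def)
  have "herm_on n (\<lambda>i j. (if i = j then 1 else 0) - complex_of_real \<epsilon> * W i j)"
    unfolding herm_on_def
  proof (intro allI impI)
    fix i j assume ij: "i < n" "j < n"
    show "(if j = i then 1 else 0) - complex_of_real \<epsilon> * W j i
        = cnj ((if i = j then 1 else 0) - complex_of_real \<epsilon> * W i j)"
      using herm_onD[OF h ij] by simp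
  qed
  moreover have "0 \<le> Re (quad_form n (\<lambda>i j. (if i = j then 1 else 0) - complex_of_real \<epsilon> * W i j) v)" for v
  proof -
    let ?S = "\<Sum>l<n. (cmod (v l))\<^sup>2"
    have "quad_form n (\<lambda>i j. (if i = j then 1 else 0) - complex_of_real \<epsilon> * W i j) v
        = (\<Sum>i<n. \<Sum>j<n. (if i = j then cnj (v i) * v j else 0) - complex_of_real \<epsilon> * (cnj (v i) * W i j * v j))"
      unfolding quad_form_def by (intro sum.cong refl) (simp add: algebra_simps)
    also have "\<dots> = (\<Sum>i<n. cnj (v i) * v i) - complex_of_real \<epsilon> * quad_form n W v"
      unfolding quad_form_def by (simp add: sum_subtractf sum_distrib_left)
    finally have e1: "Re (quad_form n (\<lambda>i j. (if i = j then 1 else 0) - complex_of_real \<epsilon> * W i j) v)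
        = ?S - \<epsilon> * Re (quad_form n W v)"
      by (simp add: Re_sum complex_mult_cnj cmod_power2 mult.commute[of "cnj _"])
    have "Re (quad_form n W v) \<le> (\<Sum>i<n. \<Sum>j<n. cmod (W i j)) * ?S"
      using complex_Re_le_cmod[of "quad_form n W v"] cmod_quad_form_le[of n W v] by linarith
    then have "\<epsilon> * Re (quad_form n W v) \<le> \<epsilon> * ((\<Sum>i<n. \<Sum>j<n. cmod (W i j)) * ?S)"
      using e(1) by (intro mult_left_mono) auto
    also have "\<dots> \<le> 1 * ?S" unfolding mult.assoc[symmetric]
      by (rule mult_right_mono[OF e(2)]) (auto intro: sum_nonneg)
    finally show ?thesis using e1 by simp
  qed
  ultimately show ?thesis unfolding psd_on_def by blast
qed

lemma two_outcome_measurement: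
  assumes W: "psd_on d W"
  obtains \<epsilon> M where "0 < \<epsilon>" "povm d 2 M"
    "\<And>\<omega>. \<omega> \<in> density d \<Longrightarrow>
       p_succ \<omega> 2 (\<lambda>i. if i = 0 then 1 else 0) (\<lambda>i A. A) M = \<epsilon> * re_frob d W (entries \<omega>)"
proof -
  define C where "C = (\<Sum>i<d. \<Sum>j<d. cmod (W i j))"
  have C0: "0 \<le> C" unfolding C_def by (intro sum_nonneg) auto
  define \<epsilon> where "\<epsilon> = 1 / (1 + C)"
  have e0: "0 < \<epsilon>" unfolding \<epsilon>_def using C0 by simp
  have eC: "\<epsilon> * C \<le> 1" unfolding \<epsilon>_def using C0 by (simp add: field_simps)
  define X where "X = mat d d (\<lambda>(i, j). complex_of_real \<epsilon> * W i j)"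
  define M where "M k = (if k = 0 then X
    else mat d d (\<lambda>(i, j). (if i = j then 1 else 0) - complex_of_real \<epsilon> * W i j))" for k :: nat
  have Xc: "X \<in> carrier_mat d d" unfolding X_def by simp
  have povm: "povm d 2 M"
    unfolding povm_def
  proof (intro conjI allI impI)
    fix k :: nat
    show "psd d (M k)"
      using psd_on_scale[OF W, of \<epsilon>] psd_on_id_minus_scaled[OF W, of \<epsilon>] e0 eC
      unfolding M_def X_def C_def by (simp add: psd_mat_iff_psd_on)
  next
    fix a b assume "a < d" "b < d"
    then show "(\<Sum>k<2. M k $$ (a, b)) = (1\<^sub>m d :: complex mat) $$ (a, b)"
      unfolding M_def X_def by (simp add: numeral_2_eq_2)
  qed
  have "p_succ \<omega> 2 (\<lambda>i. if i = 0 then 1 else 0) (\<lambda>i A. A) M = \<epsilon> * re_frob d W (entries \<omega>)"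
    if \<omega>: "\<omega> \<in> density d" for \<omega>
  proof -
    have \<omega>c: "\<omega> \<in> carrier_mat d d" using \<omega> by (rule density_carrier)
    have "p_succ \<omega> 2 (\<lambda>i. if i = 0 then 1 else 0) (\<lambda>i A. A) M = Re (mtrace (X * \<omega>))"
      unfolding p_succ_def M_def by (simp add: numeral_2_eq_2)
    also have "mtrace (X * \<omega>) = complex_of_real \<epsilon> * (\<Sum>i<d. \<Sum>j<d. W i j * \<omega> $$ (j, i))"
      unfolding mtrace_mult[OF Xc \<omega>c] by (simp add: X_def sum_distrib_left mult.assoc)
    finally show ?thesis using re_frob_entries[OF density_herm[OF \<omega>]] by simp
  qed
  with e0 povm show ?thesis by (rule that)
qed

lemma ereal_le_divide:
  fixes a c :: real and D :: ereal
  assumes a: "0 < a" and D: "0 \<le> D" and le: "ereal c * D \<le> ereal a" and c: "0 \<le> c"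
  shows "ereal c \<le> ereal a / D"
proof (cases D)
  case (real r)
  then have r: "0 \<le> r" using D by simp
  show ?thesis
  proof (cases "r = 0")
    case True
    then show ?thesis using real a by simp
  next
    case False
    then have "c * r \<le> a" "r > 0" using le real r by auto
    then have "c \<le> a / r" by (simp add: le_divide_eq)
    then show ?thesis using real False by simp
  qed
next
  case PInf
  then have "c = 0" using le c by (cases "c = 0") auto
  then show ?thesis using PInf by simp
next
  case MInf then show ?thesis using D by simp
qed

lemma ereal_le_divide_SUP:
  fixes f :: "'a \<Rightarrow> real"
  assumes a: "0 < a" and c: "0 < c" and x: "x \<in> A"
    and f: "\<And>y. y \<in> A \<Longrightarrow> 0 \<le> f y" and le: "\<And>y. y \<in> A \<Longrightarrow> c * f y \<le> a"
  shows "ereal c \<le> ereal a / (SUP y\<in>A. ereal (f y))"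
proof -
  let ?D = "SUP y\<in>A. ereal (f y)"
  have "0 \<le> ?D"
    using SUP_upper[OF x, of "\<lambda>y. ereal (f y)"] f[OF x] by (meson ereal_less_eq(5) order_trans)
  moreover have "ereal c * ?D \<le> ereal a"
  proof -
    have "?D \<le> ereal (a / c)"
      by (rule SUP_least) (use le c in \<open>auto simp: le_divide_eq mult.commute\<close>)
    then have "ereal c * ?D \<le> ereal c * ereal (a / c)" using c by (intro ereal_mult_left_mono) auto
    also have "\<dots> = ereal a" using c by simp
    finally show ?thesis .
  qed
  ultimately show ?thesis using a c by (intro ereal_le_divide) auto
qed

lemma succ_ratio_ge_infeasible:
  assumes sub: "Fk \<subseteq> density d" and ne: "Fk \<noteq> {}" and cl: "mat_closed d Fk" and cv: "mat_convex Fk"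
    and r: "\<rho> \<in> density d" and s: "0 \<le> s" and infeas: "\<not> robustness_feasible d Fk \<rho> s"
  shows "ereal (1 + s) \<le> succ_ratio d Fk \<rho>"
proof -
  obtain W where W: "psd_on d W" and dual: "\<And>Q. psd d Q \<Longrightarrow> 0 \<le> re_frob d W (entries Q)"
    and gap: "\<And>\<sigma>. \<sigma> \<in> Fk \<Longrightarrow> (1 + s) * re_frob d W (entries \<sigma>) < re_frob d W (entries \<rho>)"
    using robustness_separation[OF sub ne cl cv r s infeas] by blast
  let ?p = "\<lambda>i::nat. if i = 0 then (1::real) else 0"
  let ?L = "\<lambda>(i::nat) (A::complex mat). A"
  obtain \<epsilon> M where e0: "0 < \<epsilon>" and M: "povm d 2 M"
    and ps: "\<And>\<omega>. \<omega> \<in> density d \<Longrightarrow> p_succ \<omega> 2 ?p ?L M = \<epsilon> * re_frob d W (entries \<omega>)"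
    using two_outcome_measurement[OF W] by blast
  obtain \<sigma>1 where \<sigma>1: "\<sigma>1 \<in> Fk" using ne by blast
  have nonneg: "0 \<le> re_frob d W (entries \<sigma>)" if "\<sigma> \<in> Fk" for \<sigma>
    using dual density_psd that sub by blast
  have "0 \<le> (1 + s) * re_frob d W (entries \<sigma>1)" using nonneg[OF \<sigma>1] s by simp
  then have pos: "0 < p_succ \<rho> 2 ?p ?L M" using gap[OF \<sigma>1] ps[OF r] e0 by simp
  have le: "(1 + s) * p_succ \<sigma> 2 ?p ?L M \<le> p_succ \<rho> 2 ?p ?L M" if "\<sigma> \<in> Fk" for \<sigma>
  proof -
    have "\<epsilon> * ((1 + s) * re_frob d W (entries \<sigma>)) \<le> \<epsilon> * re_frob d W (entries \<rho>)"
      using gap[OF that] e0 by (intro mult_left_mono) auto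
    then show ?thesis using ps[OF r] ps[of \<sigma>] that sub by (auto simp: ac_simps)
  qed
  have "ereal (1 + s) \<le> ereal (p_succ \<rho> 2 ?p ?L M) / (SUP \<sigma>\<in>Fk. ereal (p_succ \<sigma> 2 ?p ?L M))"
    by (rule ereal_le_divide_SUP[OF pos _ \<sigma>1]) (use s nonneg ps e0 le sub in auto)
  also have "\<dots> \<le> succ_ratio d Fk \<rho>" unfolding succ_ratio_def
    by (rule Sup_upper) (use M channel_ensemble_id in blast)
  finally show ?thesis .
qed

lemma ereal_eq_one_plus_Inf_threshold:
  fixes x :: ereal and P :: "real \<Rightarrow> bool"
  assumes P0: "\<not> P 0"
    and le: "\<And>s. 0 \<le> s \<Longrightarrow> P s \<Longrightarrow> x \<le> ereal (1 + s)"
    and ge: "\<And>s. 0 \<le> s \<Longrightarrow> \<not> P s \<Longrightarrow> ereal (1 + s) \<le> x"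
  shows "x = 1 + Inf {ereal s | s. 0 \<le> s \<and> P s}"
proof (rule antisym)
  let ?T = "{ereal s | s. 0 \<le> s \<and> P s}"
  show "x \<le> 1 + Inf ?T"
  proof (cases "?T = {}")
    case True
    show ?thesis unfolding True by (simp add: top_ereal_def)
  next
    case False
    have "x \<le> (INF t\<in>?T. 1 + t)" using le by (intro INF_greatest) (auto simp: add.commute)
    also have "\<dots> = 1 + (INF t\<in>?T. t)" by (rule INF_ereal_add_right) (use False in auto)
    finally show ?thesis by simp
  qed
  show "1 + Inf ?T \<le> x"
  proof (rule dense_le)
    fix y assume y: "y < 1 + Inf ?T"
    show "y \<le> x"
    proof (cases "y \<le> 1")
      case True
      have "ereal 1 \<le> x" using ge[OF order_refl P0] by simp
      then show ?thesis using True by (metis one_ereal_def order_trans)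
    next
      case False
      then obtain w where w: "y = ereal w" "1 < w" using y by (cases y) auto
      then have "ereal (w - 1) < Inf ?T" using y by (cases "Inf ?T") auto
      then have "\<not> P (w - 1)" using w(2) Inf_lower[of "ereal (w - 1)" ?T] by force
      then show ?thesis using ge[of "w - 1"] w by simp
    qed
  qed
qed

lemma succ_ratio_eq_one_plus_robustness:
  assumes sub: "Fk \<subseteq> density d" and ne: "Fk \<noteq> {}" and cl: "mat_closed d Fk" and cv: "mat_convex Fk"
    and r: "\<rho> \<in> density d" and nr: "\<rho> \<notin> Fk"
  shows "succ_ratio d Fk \<rho> = 1 + gen_robustness d Fk \<rho>"
  unfolding gen_robustness_feasible
proof (rule ereal_eq_one_plus_Inf_threshold)
  show "\<not> robustness_feasible d Fk \<rho> 0"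
    using robustness_feasible_zero_imp_mem[OF density_carrier[OF r]] nr by blast
  show "succ_ratio d Fk \<rho> \<le> ereal (1 + s)" if "0 \<le> s" "robustness_feasible d Fk \<rho> s" for s
    using succ_ratio_le_feasible[OF sub r that] .
  show "ereal (1 + s) \<le> succ_ratio d Fk \<rho>" if "0 \<le> s" "\<not> robustness_feasible d Fk \<rho> s" for s
    using succ_ratio_ge_infeasible[OF sub ne cl cv r that] .
qed

theorem theorem7:
  fixes d :: nat and K :: "'k set" and F :: "'k \<Rightarrow> complex mat set" and \<rho> :: "complex mat"
  assumes sub: "\<And>k. k \<in> K \<Longrightarrow> F k \<subseteq> density d"
    and ne: "\<And>k. k \<in> K \<Longrightarrow> F k \<noteq> {}"
    and cl: "\<And>k. k \<in> K \<Longrightarrow> mat_closed d (F k)"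
    and cv: "\<And>k. k \<in> K \<Longrightarrow> mat_convex (F k)"
    and clU: "mat_closed d (\<Union>k\<in>K. F k)"
    and rho: "\<rho> \<in> density d - (\<Union>k\<in>K. F k)"
  shows "(INF k\<in>K. succ_ratio d (F k) \<rho>) = 1 + gen_robustness d (\<Union>k\<in>K. F k) \<rho>"
proof -
  have "(INF k\<in>K. succ_ratio d (F k) \<rho>) = (INF k\<in>K. 1 + gen_robustness d (F k) \<rho>)"
    using succ_ratio_eq_one_plus_robustness[OF sub ne cl cv] rho by (intro INF_cong) auto
  also have "\<dots> = 1 + (INF k\<in>K. gen_robustness d (F k) \<rho>)"
  proof (cases "K = {}")
    case True
    then show ?thesis by (simp add: top_ereal_def)
  next
    case False
    then show ?thesis by (rule INF_ereal_add_right) (simp_all add: gen_robustness_nonneg)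
  qed
  also have "\<dots> = 1 + gen_robustness d (\<Union>k\<in>K. F k) \<rho>"
    by (simp add: gen_robustness_UNION)
  finally show ?thesis .
qed

end
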